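(* The sectional curvature of $\mathrm{SU}(n,1)$ with respect to the metric $\tilde g$ at the planes spanned by standard basis elements is bounded above by $1/4$.
   Context: $\mathrm{SU}(n,1)$ is the indefinite special unitary group, with Lie algebra $\mathfrak{su}(n,1)=\{X : JX^*J=-X,\ \operatorname{tr}X=0\}$, $J=\mathrm{diag}(1,\dots,1,-1)$. With $e_{jk}$ the elementary matrices, $\alpha_{jk}=e_{jk}-e_{kj}$, $\beta_{jk}=e_{jk}+e_{kj}$, $h_j=i(e_{jj}-e_{n+1,n+1})$, the standard basis of $\mathfrak{su}(n,1)$ consists of $\alpha_{jk}, i\beta_{jk}$ ($1\le j<k\le n$), $\beta_{j,n+1}, i\alpha_{j,n+1}$, $h_j$ ($1\le j\le n$). The Cartan decomposition is $\mathfrak k=\mathrm{span}\{\alpha_{jk},i\beta_{jk},h_j\}$, $\mathfrak p=\mathrm{span}\{\beta_{j,n+1},i\alpha_{j,n+1}\}$. The canonical metric $g$ is the left-invariant metric given by $B$ on $\mathfrak p$, $-B$ on $\mathfrak k$, and $\mathfrak k\perp\mathfrak p$, where $B(X,Y)=\operatorname{tr}(\operatorname{ad}X\operatorname{ad}Y)$ is the Killing form; in it the standard basis is orthogonal with each element of squared norm $4n+4$. The metric $\tilde g=\frac{1}{n+1}g$, so standard basis elements have squared norm $4$. *)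

theory Defs
  imports Complex_Main "HOL-Library.Function_Algebras"
begin

text \<open>Complex (n+1)x(n+1) matrices are represented as functions nat => nat => complex,
  with 0-based indices 0..n (index n plays the role of the paper's index n+1),
  and entries outside {0..n} x {0..n} equal to 0.  Addition, subtraction and negation are
  pointwise (Function_Algebras).\<close>

type_synonym cmat = "nat \<Rightarrow> nat \<Rightarrow> complex"

definition supported :: "nat \<Rightarrow> cmat \<Rightarrow> bool" where
  "supported n A \<longleftrightarrow> (\<forall>i j. (n < i \<or> n < j) \<longrightarrow> A i j = 0)"

definition mmul :: "nat \<Rightarrow> cmat \<Rightarrow> cmat \<Rightarrow> cmat" where
  "mmul n A B = (\<lambda>i j. if i \<le> n \<and> j \<le> n then (\<Sum>k\<le>n. A i k * B k j) else 0)"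

definition ctr :: "cmat \<Rightarrow> cmat" where
  "ctr A = (\<lambda>i j. cnj (A j i))"

definition mtrace :: "nat \<Rightarrow> cmat \<Rightarrow> complex" where
  "mtrace n A = (\<Sum>i\<le>n. A i i)"

definition smul :: "complex \<Rightarrow> cmat \<Rightarrow> cmat" where
  "smul c A = (\<lambda>i j. c * A i j)"

definition Jmat :: "nat \<Rightarrow> cmat" where
  "Jmat n = (\<lambda>i j. if i = j \<and> i \<le> n then (if i = n then -1 else 1) else 0)"

definition su :: "nat \<Rightarrow> cmat set" where
  "su n = {X. supported n X \<and> mmul n (mmul n (Jmat n) (ctr X)) (Jmat n) = - X \<and> mtrace n X = 0}"

text \<open>Lie bracket of left-invariant vector fields on a matrix group: the commutator.\<close>
definition bracket :: "nat \<Rightarrow> cmat \<Rightarrow> cmat \<Rightarrow> cmat" where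
  "bracket n X Y = mmul n X Y - mmul n Y X"

text \<open>Elementary matrix e_{jk}, with the paper's 1-based indices j,k in {1..n+1}.\<close>
definition elem :: "nat \<Rightarrow> nat \<Rightarrow> cmat" where
  "elem j k = (\<lambda>a b. if a = j - 1 \<and> b = k - 1 then 1 else 0)"

definition alpha :: "nat \<Rightarrow> nat \<Rightarrow> cmat" where
  "alpha j k = elem j k - elem k j"

definition beta :: "nat \<Rightarrow> nat \<Rightarrow> cmat" where
  "beta j k = elem j k + elem k j"

definition hvec :: "nat \<Rightarrow> nat \<Rightarrow> cmat" where
  "hvec n j = smul \<i> (elem j j - elem (n+1) (n+1))"

definition kbasis :: "nat \<Rightarrow> cmat set" where
  "kbasis n = {alpha j k | j k. 1 \<le> j \<and> j < k \<and> k \<le> n}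
            \<union> {smul \<i> (beta j k) | j k. 1 \<le> j \<and> j < k \<and> k \<le> n}
            \<union> {hvec n j | j. 1 \<le> j \<and> j \<le> n}"

definition pbasis :: "nat \<Rightarrow> cmat set" where
  "pbasis n = {beta j (n+1) | j. 1 \<le> j \<and> j \<le> n}
            \<union> {smul \<i> (alpha j (n+1)) | j. 1 \<le> j \<and> j \<le> n}"

definition std_basis :: "nat \<Rightarrow> cmat set" where
  "std_basis n = kbasis n \<union> pbasis n"

definition coord :: "nat \<Rightarrow> cmat \<Rightarrow> cmat \<Rightarrow> real" where
  "coord n Z E = (THE r. \<exists>c. (\<forall>F. F \<notin> std_basis n \<longrightarrow> c F = 0)
                        \<and> Z = (\<Sum>F\<in>std_basis n. smul (complex_of_real (c F)) F) \<and> r = c E)"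

text \<open>Killing form B(X,Y) = tr(ad X ad Y), the trace of the real-linear endomorphism
  ad X o ad Y of su(n,1), computed in the standard basis.\<close>
definition killing :: "nat \<Rightarrow> cmat \<Rightarrow> cmat \<Rightarrow> real" where
  "killing n X Y = (\<Sum>E\<in>std_basis n. coord n (bracket n X (bracket n Y E)) E)"

definition kpart :: "nat \<Rightarrow> cmat \<Rightarrow> cmat" where
  "kpart n X = (\<Sum>E\<in>kbasis n. smul (complex_of_real (coord n X E)) E)"

definition ppart :: "nat \<Rightarrow> cmat \<Rightarrow> cmat" where
  "ppart n X = (\<Sum>E\<in>pbasis n. smul (complex_of_real (coord n X E)) E)"

definition gcan :: "nat \<Rightarrow> cmat \<Rightarrow> cmat \<Rightarrow> real" where
  "gcan n X Y = killing n (ppart n X) (ppart n Y) - killing n (kpart n X) (kpart n Y)"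

definition gt :: "nat \<Rightarrow> cmat \<Rightarrow> cmat \<Rightarrow> real" where
  "gt n X Y = gcan n X Y / real (n + 1)"

text \<open>Levi-Civita connection of the left-invariant metric g~ on left-invariant fields,
  characterised by the Koszul formula
  2 g(nabla_X Y, W) = g([X,Y],W) - g([Y,W],X) + g([W,X],Y).\<close>
definition nabla :: "nat \<Rightarrow> cmat \<Rightarrow> cmat \<Rightarrow> cmat" where
  "nabla n X Y = (THE Z. Z \<in> su n \<and> (\<forall>W\<in>su n.
      2 * gt n Z W = gt n (bracket n X Y) W - gt n (bracket n Y W) X + gt n (bracket n W X) Y))"

definition curv :: "nat \<Rightarrow> cmat \<Rightarrow> cmat \<Rightarrow> cmat \<Rightarrow> cmat" where
  "curv n X Y Z = nabla n X (nabla n Y Z) - nabla n Y (nabla n X Z) - nabla n (bracket n X Y) Z"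

definition sec_curv :: "nat \<Rightarrow> cmat \<Rightarrow> cmat \<Rightarrow> real" where
  "sec_curv n X Y = gt n (curv n X Y Y) X / (gt n X X * gt n Y Y - (gt n X Y)\<^sup>2)"

end

theory Submission
  imports Defs
begin

text \<open>For a < b the standard basis elements are the matrices with a unit u \<in> {1, \<i>} at (a, b)
  and its J-partner at (b, a); the remaining ones are the diagonal h_j. Reading coordinates off
  single entries shows that the Killing form is B(X, Y) = 2(n+1) Re tr(XY), so that
  g~(X, Y) = 2 Re \<Sum> X_ab conj(Y_ab) is a Frobenius inner product. For it, ad A is adjoint to
  -ad(\<theta>A), with \<theta>X = JXJ the Cartan involution, and the Koszul formula yields
  \<nabla>_X Y = ([X,Y] + [\<theta>Y,X] + [\<theta>X,Y])/2. Standard basis elements are \<theta>-eigenvectors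
  (eigenvalue 1 on k, -1 on p), and for such X, Y one computes
  g~(R(X,Y)Y, X) = K |[X,Y]|^2 with K \<in> {1/4, -7/4}. Finally |X|^2 = |Y|^2 = 4, X and Y are
  orthogonal unless both are diagonal (and then [X,Y] = 0), and |[X,Y]|^2 \<le> 16 because
  multiplying by a basis element keeps at most two rows or columns of a matrix, rescaled by units.\<close>

definition jsgn :: "nat \<Rightarrow> nat \<Rightarrow> complex" where
  "jsgn n a = (if a = n then -1 else 1)"

lemma jsgn_sq[simp]: "jsgn n a * jsgn n a = 1"
  by (simp add: jsgn_def)

lemma cnj_jsgn: "cnj (jsgn n a) = jsgn n a"
  by (simp add: jsgn_def)

lemma jsgn_cases: "jsgn n a = 1 \<or> jsgn n a = -1"
  by (simp add: jsgn_def)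

lemma norm_jsgn: "cmod (jsgn n b) = 1"
  by (simp add: jsgn_def)

lemma mmul_Jmat_right: "mmul n A (Jmat n) a b = (if a \<le> n \<and> b \<le> n then A a b * jsgn n b else 0)"
  unfolding mmul_def Jmat_def jsgn_def by (auto simp: if_distrib sum.delta cong: if_cong)

lemma mmul_Jmat_left: "mmul n (Jmat n) A a b = (if a \<le> n \<and> b \<le> n then jsgn n a * A a b else 0)"
proof -
  have J: "Jmat n a k = (if k = a \<and> k \<le> n then jsgn n k else 0)" for k
    unfolding Jmat_def jsgn_def by auto
  show ?thesis unfolding mmul_def J by (auto simp: if_distrib if_distribR sum.delta cong: if_cong)
qed

definition su_cond :: "nat \<Rightarrow> cmat \<Rightarrow> bool" where
  "su_cond n X \<longleftrightarrow> (\<forall>a\<le>n. \<forall>b\<le>n. X a b = - (jsgn n a * jsgn n b) * cnj (X b a))"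

lemma su_iff: "X \<in> su n \<longleftrightarrow> supported n X \<and> su_cond n X \<and> (\<Sum>a\<le>n. X a a) = 0"
proof -
  have J: "mmul n (mmul n (Jmat n) (ctr X)) (Jmat n) a b =
      (if a \<le> n \<and> b \<le> n then jsgn n a * jsgn n b * cnj (X b a) else 0)" for a b
    by (simp add: mmul_Jmat_right mmul_Jmat_left ctr_def mult_ac)
  have sign: "(jsgn n a * jsgn n b * cnj (X b a) = - X a b) \<longleftrightarrow> (X a b = - (jsgn n a * jsgn n b) * cnj (X b a))"
    for a b by (auto simp: jsgn_def)
  have "(mmul n (mmul n (Jmat n) (ctr X)) (Jmat n) = - X) \<longleftrightarrow>
      (\<forall>a b. (if a \<le> n \<and> b \<le> n then jsgn n a * jsgn n b * cnj (X b a) else 0) = - X a b)"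
    by (simp add: fun_eq_iff J)
  also have "\<dots> \<longleftrightarrow> supported n X \<and> su_cond n X"
    unfolding supported_def su_cond_def sign[symmetric] by (auto simp: not_le)
  finally show ?thesis unfolding su_def mtrace_def by blast
qed

section \<open>The standard basis as explicit matrices\<close>

definition offdiag :: "nat \<Rightarrow> nat \<Rightarrow> nat \<Rightarrow> complex \<Rightarrow> cmat" where
  "offdiag n a b u = (\<lambda>x y. if x = a \<and> y = b then u else if x = b \<and> y = a then - jsgn n b * cnj u else 0)"

definition hdiag :: "nat \<Rightarrow> nat \<Rightarrow> cmat" where
  "hdiag n a = (\<lambda>x y. if x = a \<and> y = a then \<i> else if x = n \<and> y = n then - \<i> else 0)"

definition phase :: "bool \<Rightarrow> complex" where
  "phase t = (if t then \<i> else 1)"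

text \<open>Indices are 0-based: (a, b, t) with a < b is the element with entry \<i> (if t) or 1 (if \<not> t)
  at (a, b), i.e. \<alpha>, i\<beta>, \<beta> or i\<alpha> with indices a+1, b+1; (a, a, True) is h_(a+1).\<close>
definition sbasis :: "nat \<Rightarrow> nat \<times> nat \<times> bool \<Rightarrow> cmat" where
  "sbasis n i = (case i of (a, b, t) \<Rightarrow> if a = b then hdiag n a else offdiag n a b (phase t))"

definition sidx :: "nat \<Rightarrow> (nat \<times> nat \<times> bool) set" where
  "sidx n = {(a, b, t). a < b \<and> b \<le> n} \<union> {(a, b, t). a = b \<and> a < n \<and> t}"

definition kidx :: "nat \<Rightarrow> (nat \<times> nat \<times> bool) set" where
  "kidx n = {(a, b, t). a < b \<and> b < n} \<union> {(a, b, t). a = b \<and> a < n \<and> t}"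

definition pidx :: "nat \<Rightarrow> (nat \<times> nat \<times> bool) set" where
  "pidx n = {(a, b, t). a < b \<and> b = n}"

definition entry_coord :: "nat \<times> nat \<times> bool \<Rightarrow> cmat \<Rightarrow> real" where
  "entry_coord i Z = (case i of (a, b, t) \<Rightarrow> if t then Im (Z a b) else Re (Z a b))"

lemma sidx_split: "sidx n = kidx n \<union> pidx n" and kidx_pidx_disjoint: "kidx n \<inter> pidx n = {}"
  unfolding sidx_def kidx_def pidx_def by auto

lemma finite_sidx[simp]: "finite (sidx n)"
proof -
  have "sidx n \<subseteq> {..n} \<times> {..n} \<times> UNIV" unfolding sidx_def by auto
  then show ?thesis by (rule finite_subset) auto
qed

lemma finite_kidx[simp]: "finite (kidx n)" and finite_pidx[simp]: "finite (pidx n)"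
  using finite_sidx[of n] unfolding sidx_split by auto

lemma alpha_eq_offdiag: "a < b \<Longrightarrow> b < n \<Longrightarrow> alpha (Suc a) (Suc b) = offdiag n a b 1"
  unfolding alpha_def elem_def offdiag_def jsgn_def by (simp add: fun_eq_iff)

lemma i_beta_eq_offdiag: "a < b \<Longrightarrow> b < n \<Longrightarrow> smul \<i> (beta (Suc a) (Suc b)) = offdiag n a b \<i>"
  unfolding beta_def elem_def offdiag_def jsgn_def smul_def by (simp add: fun_eq_iff)

lemma beta_last_eq_offdiag: "a < n \<Longrightarrow> beta (Suc a) (Suc n) = offdiag n a n 1"
  unfolding beta_def elem_def offdiag_def jsgn_def by (simp add: fun_eq_iff)

lemma i_alpha_last_eq_offdiag: "a < n \<Longrightarrow> smul \<i> (alpha (Suc a) (Suc n)) = offdiag n a n \<i>"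
  unfolding alpha_def elem_def offdiag_def jsgn_def smul_def by (simp add: fun_eq_iff)

lemma hvec_eq_hdiag: "a < n \<Longrightarrow> hvec n (Suc a) = hdiag n a"
  unfolding hvec_def elem_def hdiag_def smul_def by (simp add: fun_eq_iff)

lemma Collect_pairs_shift:
  assumes "\<And>a b. a < b \<Longrightarrow> b < n \<Longrightarrow> f (Suc a) (Suc b) = g a b"
  shows "{f j k | j k. 1 \<le> j \<and> j < k \<and> k \<le> n} = {g a b | a b. a < b \<and> b < n}"
proof (intro equalityI subsetI)
  fix x assume "x \<in> {f j k | j k. 1 \<le> j \<and> j < k \<and> k \<le> n}"
  then obtain j k where "x = f j k" "1 \<le> j" "j < k" "k \<le> n" by blast
  moreover obtain a b where "j = Suc a" "k = Suc b" using \<open>1 \<le> j\<close> \<open>j < k\<close> not0_implies_Suc by fastforce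
  ultimately show "x \<in> {g a b | a b. a < b \<and> b < n}" using assms by (auto simp: Suc_le_eq)
next
  fix x assume "x \<in> {g a b | a b. a < b \<and> b < n}"
  then obtain a b where "x = g a b" "a < b" "b < n" by blast
  then show "x \<in> {f j k | j k. 1 \<le> j \<and> j < k \<and> k \<le> n}"
    using assms by (intro CollectI exI[of _ "Suc a"] exI[of _ "Suc b"]) simp
qed

lemma Collect_shift:
  assumes "\<And>a. a < n \<Longrightarrow> f (Suc a) = g a"
  shows "{f j | j. 1 \<le> j \<and> j \<le> n} = {g a | a. a < n}"
proof (intro equalityI subsetI)
  fix x assume "x \<in> {f j | j. 1 \<le> j \<and> j \<le> n}"
  then obtain j where "x = f j" "1 \<le> j" "j \<le> n" by blast
  moreover obtain a where "j = Suc a" using \<open>1 \<le> j\<close> not0_implies_Suc by fastforce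
  ultimately show "x \<in> {g a | a. a < n}" using assms by auto
next
  fix x assume "x \<in> {g a | a. a < n}"
  then obtain a where "x = g a" "a < n" by blast
  then show "x \<in> {f j | j. 1 \<le> j \<and> j \<le> n}" using assms by (intro CollectI exI[of _ "Suc a"]) simp
qed

lemma kbasis_eq: "kbasis n = sbasis n ` kidx n"
proof -
  have "{alpha j k | j k. 1 \<le> j \<and> j < k \<and> k \<le> n} = {offdiag n a b 1 | a b. a < b \<and> b < n}"
    "{smul \<i> (beta j k) | j k. 1 \<le> j \<and> j < k \<and> k \<le> n} = {offdiag n a b \<i> | a b. a < b \<and> b < n}"
    "{hvec n j | j. 1 \<le> j \<and> j \<le> n} = {hdiag n a | a. a < n}"
    by (intro Collect_pairs_shift Collect_shift alpha_eq_offdiag i_beta_eq_offdiag hvec_eq_hdiag; assumption)+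
  then have "kbasis n = {offdiag n a b 1 | a b. a < b \<and> b < n} \<union> {offdiag n a b \<i> | a b. a < b \<and> b < n}
      \<union> {hdiag n a | a. a < n}"
    unfolding kbasis_def by simp
  also have "\<dots> = sbasis n ` kidx n"
    unfolding kidx_def sbasis_def phase_def image_def
    apply (auto split: if_splits intro: bexI[where x = "(_, _, True)"])
    subgoal for a b by (rule bexI[of _ "(a, b, False)"]) auto
    subgoal for a b by (rule bexI[of _ "(a, b, True)"]) auto
    done
  finally show ?thesis .
qed

lemma pbasis_eq: "pbasis n = sbasis n ` pidx n"
proof -
  have "{beta j (n+1) | j. 1 \<le> j \<and> j \<le> n} = {offdiag n a n 1 | a. a < n}"
    "{smul \<i> (alpha j (n+1)) | j. 1 \<le> j \<and> j \<le> n} = {offdiag n a n \<i> | a. a < n}"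
    by (intro Collect_shift; simp add: beta_last_eq_offdiag i_alpha_last_eq_offdiag)+
  then have "pbasis n = {offdiag n a n 1 | a. a < n} \<union> {offdiag n a n \<i> | a. a < n}"
    unfolding pbasis_def by simp
  also have "\<dots> = sbasis n ` pidx n"
    unfolding pidx_def sbasis_def phase_def image_def
    by (auto split: if_splits)
  finally show ?thesis .
qed

lemma std_basis_eq: "std_basis n = sbasis n ` sidx n"
  unfolding std_basis_def kbasis_eq pbasis_eq sidx_split by auto

lemma entry_coord_sbasis: assumes "i \<in> sidx n" "j \<in> sidx n" shows "entry_coord i (sbasis n j) = (if i = j then 1 else 0)"
proof -
  obtain a b t where i: "i = (a,b,t)" by (cases i) auto
  obtain c d s where j: "j = (c,d,s)" by (cases j) auto
  have ab: "a < b \<and> b \<le> n \<or> a = b \<and> a < n \<and> t" using assms(1) unfolding i sidx_def by auto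
  have cd: "c < d \<and> d \<le> n \<or> c = d \<and> c < n \<and> s" using assms(2) unfolding j sidx_def by auto
  show ?thesis
  proof (cases "c = d")
    case True
    then show ?thesis using ab cd unfolding i j entry_coord_def sbasis_def hdiag_def by auto
  next
    case False
    then show ?thesis using ab cd unfolding i j entry_coord_def sbasis_def offdiag_def phase_def jsgn_def by auto
  qed
qed

lemma inj_on_sbasis: "inj_on (sbasis n) (sidx n)"
proof
  fix i j assume "i \<in> sidx n" "j \<in> sidx n" "sbasis n i = sbasis n j"
  then have "entry_coord i (sbasis n i) = entry_coord i (sbasis n j)" by simp
  then show "i = j" using entry_coord_sbasis[of i n i] entry_coord_sbasis[of i n j] \<open>i \<in> sidx n\<close> \<open>j \<in> sidx n\<close>
    by (auto split: if_splits)
qed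

lemma sum_fun_apply: "(sum f S) x = sum (\<lambda>i. f i x) S"
  by (induction S rule: infinite_finite_induct) auto

lemma sum_fun_apply2: "(sum f S :: cmat) x y = sum (\<lambda>i. f i x y) S"
  by (simp add: sum_fun_apply)

lemma sum_strict_upper: fixes B :: "nat set" assumes "finite B"
  shows "(\<Sum>i\<in>{(a,b,t). a < b \<and> b \<in> B}. g i) = (\<Sum>b\<in>B. \<Sum>a<b. g (a,b,False) + g (a,b,True))"
proof -
  have "(\<Sum>b\<in>B. \<Sum>a<b. g (a,b,False) + g (a,b,True)) = (\<Sum>b\<in>B. \<Sum>a<b. \<Sum>t\<in>UNIV. g (a,b,t))"
    by (simp add: UNIV_bool add.commute)
  also have "\<dots> = (\<Sum>b\<in>B. \<Sum>p\<in>{..<b} \<times> UNIV. g (fst p, b, snd p))"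
    by (simp add: sum.cartesian_product split_beta)
  also have "\<dots> = (\<Sum>q\<in>(SIGMA b:B. {..<b} \<times> UNIV). g (fst (snd q), fst q, snd (snd q)))"
    using assms by (subst sum.Sigma) (auto simp: split_beta)
  also have "\<dots> = (\<Sum>i\<in>{(a,b,t). a < b \<and> b \<in> B}. g i)"
    by (rule sum.reindex_bij_witness[of _ "\<lambda>(a,b,t). (b,a,t)" "\<lambda>(b,a,t). (a,b,t)"]) auto
  finally show ?thesis by simp
qed

lemma sum_diag_index: "(\<Sum>i\<in>{(a,b,t). a = b \<and> a < n \<and> t}. g i) = (\<Sum>a<n. g (a,a,True))"
  by (rule sum.reindex_bij_witness[of _ "\<lambda>a. (a,a,True)" "\<lambda>(a,b,t). a"]) auto

lemma sum_sidx: "sum g (sidx n) = (\<Sum>b\<le>n. \<Sum>a<b. g (a,b,False) + g (a,b,True)) + (\<Sum>a<n. g (a,a,True))"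
proof -
  have "sidx n = {(a,b,t). a < b \<and> b \<in> {..n}} \<union> {(a,b,t). a = b \<and> a < n \<and> t}"
    unfolding sidx_def by auto
  moreover have "finite {(a,b,t::bool). a < b \<and> b \<in> {..n}}"
    by (rule finite_subset[of _ "{..n} \<times> {..n} \<times> (UNIV::bool set)"]) auto
  moreover have "finite {(a,b,t::bool). a = b \<and> a < n \<and> t}"
    by (rule finite_subset[of _ "{..n} \<times> {..n} \<times> (UNIV::bool set)"]) auto
  ultimately show ?thesis using sum_strict_upper[of "{..n}" g]
    by (simp add: sum.union_disjoint disjoint_iff sum_diag_index)
qed

section \<open>Coordinates in the standard basis\<close>

definition lincomb :: "nat \<Rightarrow> (nat \<times> nat \<times> bool \<Rightarrow> real) \<Rightarrow> cmat" where
  "lincomb n c = (\<Sum>i\<in>sidx n. smul (complex_of_real (c i)) (sbasis n i))"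

lemma offdiag_entry: "a < b \<Longrightarrow> offdiag n a b u x y = (if x = a \<and> y = b then u else 0) + (if x = b \<and> y = a then - jsgn n b * cnj u else 0)"
  unfolding offdiag_def by auto

lemma hdiag_entry: "a < n \<Longrightarrow> hdiag n a x y = (if x = a \<and> y = a then \<i> else 0) + (if x = n \<and> y = n then - \<i> else 0)"
  unfolding hdiag_def by auto

lemma offdiag_combine: "complex_of_real r * offdiag n a b 1 x y + complex_of_real s * offdiag n a b \<i> x y = offdiag n a b (complex_of_real r + \<i> * complex_of_real s) x y"
  unfolding offdiag_def by (auto simp: algebra_simps)

lemma sum_upper_delta: "(\<Sum>b\<le>(n::nat). \<Sum>a<b. (if x = a \<and> y = b then f a b else 0)) = (if x < y \<and> y \<le> n then f x y else 0)"
proof -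
  have "(\<Sum>b\<le>n. \<Sum>a<b. (if x = a \<and> y = b then f a b else 0)) = (\<Sum>b\<le>n. if y = b then (if x < b then f x b else 0) else 0)"
  proof (rule sum.cong[OF refl])
    fix b show "(\<Sum>a<b. (if x = a \<and> y = b then f a b else 0)) = (if y = b then (if x < b then f x b else 0) else 0)"
      by (cases "y = b") (simp_all add: sum.delta sum.delta')
  qed
  also have "\<dots> = (if x < y \<and> y \<le> n then f x y else 0)"
    by (simp add: sum.delta)
  finally show ?thesis .
qed

lemma sum_lower_delta: "(\<Sum>b\<le>(n::nat). \<Sum>a<b. (if x = b \<and> y = a then f a b else 0)) = (if y < x \<and> x \<le> n then f y x else 0)"
proof -
  have "(\<Sum>b\<le>n. \<Sum>a<b. (if x = b \<and> y = a then f a b else 0)) = (\<Sum>b\<le>n. if x = b then (if y < b then f y b else 0) else 0)"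
  proof (rule sum.cong[OF refl])
    fix b show "(\<Sum>a<b. (if x = b \<and> y = a then f a b else 0)) = (if x = b then (if y < b then f y b else 0) else 0)"
      by (cases "x = b") (simp_all add: sum.delta sum.delta')
  qed
  also have "\<dots> = (if y < x \<and> x \<le> n then f y x else 0)"
    by (simp add: sum.delta)
  finally show ?thesis .
qed

lemma sum_offdiag_entry: "(\<Sum>b\<le>n. \<Sum>a<b. offdiag n a b (w a b) x y) =
   (if x < y \<and> y \<le> n then w x y else 0) + (if y < x \<and> x \<le> n then - jsgn n x * cnj (w y x) else 0)"
proof -
  have "(\<Sum>b\<le>n. \<Sum>a<b. offdiag n a b (w a b) x y) =
    (\<Sum>b\<le>n. \<Sum>a<b. (if x = a \<and> y = b then w a b else 0) + (if x = b \<and> y = a then - jsgn n b * cnj (w a b) else 0))"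
    by (intro sum.cong refl) (simp add: offdiag_entry)
  also have "\<dots> = (\<Sum>b\<le>n. \<Sum>a<b. (if x = a \<and> y = b then w a b else 0)) +
     (\<Sum>b\<le>n. \<Sum>a<b. (if x = b \<and> y = a then - jsgn n b * cnj (w a b) else 0))"
    by (simp add: sum.distrib)
  also have "\<dots> = (if x < y \<and> y \<le> n then w x y else 0) + (if y < x \<and> x \<le> n then - jsgn n x * cnj (w y x) else 0)"
    by (simp only: sum_upper_delta sum_lower_delta[where f = "\<lambda>a b. - jsgn n b * cnj (w a b)"])
  finally show ?thesis .
qed

lemma sum_hdiag_entry: "(\<Sum>a<n. c a * hdiag n a x y) = (if x = y \<and> x < n then \<i> * c x else 0) + (if x = n \<and> y = n then - \<i> * (\<Sum>a<n. c a) else 0)"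
proof -
  have "(\<Sum>a<n. c a * hdiag n a x y) = (\<Sum>a<n. (if x = a then (if y = a then \<i> * c a else 0) else 0) + (if x = n \<and> y = n then - \<i> * c a else 0))"
    by (intro sum.cong refl) (auto simp: hdiag_entry)
  also have "\<dots> = (if x = y \<and> x < n then \<i> * c x else 0) + (if x = n \<and> y = n then - \<i> * (\<Sum>a<n. c a) else 0)"
    by (cases "x = n \<and> y = n") (auto simp: sum.distrib sum.delta sum.delta' sum_distrib_left)
  finally show ?thesis .
qed

lemma lincomb_entry: "lincomb n c x y =
   (if x < y \<and> y \<le> n then complex_of_real (c (x,y,False)) + \<i> * complex_of_real (c (x,y,True)) else 0)
 + (if y < x \<and> x \<le> n then - jsgn n x * cnj (complex_of_real (c (y,x,False)) + \<i> * complex_of_real (c (y,x,True))) else 0)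
 + (if x = y \<and> x < n then \<i> * complex_of_real (c (x,x,True)) else 0)
 + (if x = n \<and> y = n then - \<i> * (\<Sum>a<n. complex_of_real (c (a,a,True))) else 0)"
proof -
  have "lincomb n c x y = (\<Sum>i\<in>sidx n. complex_of_real (c i) * sbasis n i x y)"
    unfolding lincomb_def sum_fun_apply2 smul_def by simp
  also have "\<dots> = (\<Sum>b\<le>n. \<Sum>a<b. offdiag n a b (complex_of_real (c (a,b,False)) + \<i> * complex_of_real (c (a,b,True))) x y)
     + (\<Sum>a<n. complex_of_real (c (a,a,True)) * hdiag n a x y)"
    unfolding sum_sidx
    by (intro arg_cong2[where f = "(+)"] sum.cong refl) (auto simp: sbasis_def phase_def offdiag_combine)
  finally show ?thesis by (simp add: sum_offdiag_entry sum_hdiag_entry add.assoc)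
qed

lemma su_entry: "X \<in> su n \<Longrightarrow> a \<le> n \<Longrightarrow> b \<le> n \<Longrightarrow> X a b = - (jsgn n a * jsgn n b) * cnj (X b a)"
  unfolding su_iff su_cond_def by blast

lemma su_supported: "X \<in> su n \<Longrightarrow> n < a \<or> n < b \<Longrightarrow> X a b = 0"
  unfolding su_iff supported_def by blast

lemma su_trace: "X \<in> su n \<Longrightarrow> (\<Sum>a\<le>n. X a a) = 0"
  unfolding su_iff by blast

lemma su_diag_imaginary: assumes "X \<in> su n" "a \<le> n" shows "X a a = \<i> * complex_of_real (Im (X a a))"
proof -
  have "X a a = - cnj (X a a)" using su_entry[OF assms(1) assms(2) assms(2)]
    by (simp add: jsgn_def split: if_splits)
  then have "Re (X a a) = 0" by (simp add: complex_eq_iff)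
  then show ?thesis by (simp add: complex_eq_iff)
qed

lemma lincomb_entry_coord: assumes Z: "Z \<in> su n" shows "lincomb n (\<lambda>i. entry_coord i Z) = Z"
proof (intro ext)
  fix x y
  have ce: "\<And>z. complex_of_real (Re z) + \<i> * complex_of_real (Im z) = z" by (simp add: complex_eq_iff)
  consider "x < y \<and> y \<le> n" | "y < x \<and> x \<le> n" | "x = y \<and> x < n" | "x = n \<and> y = n" | "n < x \<or> n < y"
    by linarith
  then show "lincomb n (\<lambda>i. entry_coord i Z) x y = Z x y"
  proof cases
    case 1 then show ?thesis by (simp add: lincomb_entry entry_coord_def ce)
  next
    case 2
    then have "Z x y = - (jsgn n x * jsgn n y) * cnj (Z y x)" by (intro su_entry[OF Z]) auto
    moreover have "jsgn n y = 1" using 2 by (simp add: jsgn_def)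
    ultimately show ?thesis using 2 by (simp add: lincomb_entry entry_coord_def ce)
  next
    case 3
    then show ?thesis using su_diag_imaginary[OF Z, of x] by (simp add: lincomb_entry entry_coord_def)
  next
    case 4
    have "(\<Sum>a\<le>n. Z a a) = 0" by (rule su_trace[OF Z])
    then have "Z n n = - (\<Sum>a<n. Z a a)" by (simp add: lessThan_Suc_atMost[symmetric] add_eq_0_iff)
    also have "\<dots> = - (\<Sum>a<n. \<i> * complex_of_real (Im (Z a a)))"
      using su_diag_imaginary[OF Z] by (intro arg_cong[where f = uminus] sum.cong) auto
    finally have "Z n n = - (\<i> * (\<Sum>a<n. complex_of_real (Im (Z a a))))" by (simp only: sum_distrib_left)
    then show ?thesis using 4 by (simp add: lincomb_entry entry_coord_def)
  next
    case 5
    then show ?thesis using su_supported[OF Z 5] by (auto simp: lincomb_entry)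
  qed
qed

lemma entry_coord_lincomb: assumes "j \<in> sidx n" shows "entry_coord j (lincomb n c) = c j"
proof -
  obtain a b t where j: "j = (a,b,t)" by (cases j) auto
  have "a < b \<and> b \<le> n \<or> a = b \<and> a < n \<and> t" using assms unfolding j sidx_def by auto
  then show ?thesis unfolding j by (cases t) (auto simp: lincomb_entry entry_coord_def)
qed

lemma coord_sbasis: assumes Z: "Z \<in> su n" and j: "j \<in> sidx n" shows "coord n Z (sbasis n j) = entry_coord j Z"
  unfolding coord_def
proof (rule the_equality)
  let ?c = "\<lambda>F. if F \<in> std_basis n then entry_coord (inv_into (sidx n) (sbasis n) F) Z else 0"
  have cb: "?c (sbasis n i) = entry_coord i Z" if "i \<in> sidx n" for i
    using that inj_on_sbasis[of n] by (simp add: std_basis_eq inv_into_f_f)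
  have "(\<Sum>F\<in>std_basis n. smul (complex_of_real (?c F)) F) = (\<Sum>i\<in>sidx n. smul (complex_of_real (?c (sbasis n i))) (sbasis n i))"
    unfolding std_basis_eq by (subst sum.reindex[OF inj_on_sbasis]) (simp only: comp_def)
  also have "\<dots> = lincomb n (\<lambda>i. entry_coord i Z)" unfolding lincomb_def by (intro sum.cong refl) (simp add: cb)
  also have "\<dots> = Z" by (rule lincomb_entry_coord[OF Z])
  finally show "\<exists>c. (\<forall>F. F \<notin> std_basis n \<longrightarrow> c F = 0) \<and> Z = (\<Sum>F\<in>std_basis n. smul (complex_of_real (c F)) F) \<and> entry_coord j Z = c (sbasis n j)"
    using cb[OF j] by (intro exI[of _ ?c]) auto
next
  fix r assume "\<exists>c. (\<forall>F. F \<notin> std_basis n \<longrightarrow> c F = 0) \<and> Z = (\<Sum>F\<in>std_basis n. smul (complex_of_real (c F)) F) \<and> r = c (sbasis n j)"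
  then obtain c where c: "Z = (\<Sum>F\<in>std_basis n. smul (complex_of_real (c F)) F)" "r = c (sbasis n j)" by blast
  have "Z = (\<Sum>i\<in>sidx n. smul (complex_of_real (c (sbasis n i))) (sbasis n i))"
    unfolding c(1) std_basis_eq by (subst sum.reindex[OF inj_on_sbasis]) (simp only: comp_def)
  then have "Z = lincomb n (c \<circ> sbasis n)" unfolding lincomb_def by simp
  then have "entry_coord j Z = (c \<circ> sbasis n) j" using entry_coord_lincomb[OF j] by simp
  then show "r = entry_coord j Z" using c(2) by simp
qed

section \<open>The Killing form\<close>

lemma mmul_offdiag_right: assumes "a < b" shows "mmul n A (offdiag n a b u) k c =
  (if k \<le> n \<and> c \<le> n then (if c = b \<and> a \<le> n then A k a * u else 0) + (if c = a \<and> b \<le> n then A k b * (- jsgn n b * cnj u) else 0) else 0)"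
proof -
  have "(\<Sum>m\<le>n. A k m * offdiag n a b u m c) = (\<Sum>m\<le>n. (if m = a then (if c = b then A k m * u else 0) else 0) + (if m = b then (if c = a then A k m * (- jsgn n b * cnj u) else 0) else 0))"
    using assms by (intro sum.cong refl) (auto simp: offdiag_entry)
  also have "\<dots> = (if c = b \<and> a \<le> n then A k a * u else 0) + (if c = a \<and> b \<le> n then A k b * (- jsgn n b * cnj u) else 0)"
    by (simp add: sum.distrib)
  finally show ?thesis unfolding mmul_def by simp
qed

lemma mmul_offdiag_left: assumes "a < b" shows "mmul n (offdiag n a b u) A k c =
  (if k \<le> n \<and> c \<le> n then (if k = a \<and> b \<le> n then u * A b c else 0) + (if k = b \<and> a \<le> n then (- jsgn n b * cnj u) * A a c else 0) else 0)"
proof -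
  have "(\<Sum>m\<le>n. offdiag n a b u k m * A m c) = (\<Sum>m\<le>n. (if m = b then (if k = a then u * A m c else 0) else 0) + (if m = a then (if k = b then (- jsgn n b * cnj u) * A m c else 0) else 0))"
    using assms by (intro sum.cong refl) (auto simp: offdiag_entry)
  also have "\<dots> = (if k = a \<and> b \<le> n then u * A b c else 0) + (if k = b \<and> a \<le> n then (- jsgn n b * cnj u) * A a c else 0)"
    by (simp add: sum.distrib)
  finally show ?thesis unfolding mmul_def by simp
qed

lemma mmul_hdiag_right: assumes "a < n" shows "mmul n A (hdiag n a) k c =
  (if k \<le> n \<and> c \<le> n then (if c = a then A k a * \<i> else 0) + (if c = n then - (A k n * \<i>) else 0) else 0)"
proof -
  have "(\<Sum>m\<le>n. A k m * hdiag n a m c) = (\<Sum>m\<le>n. (if m = a then (if c = a then A k m * \<i> else 0) else 0) + (if m = n then (if c = n then - (A k m * \<i>) else 0) else 0))"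
    using assms by (intro sum.cong refl) (auto simp: hdiag_entry)
  also have "\<dots> = (if c = a then A k a * \<i> else 0) + (if c = n then - (A k n * \<i>) else 0)"
    using assms by (simp add: sum.distrib)
  finally show ?thesis unfolding mmul_def by simp
qed

lemma mmul_hdiag_left: assumes "a < n" shows "mmul n (hdiag n a) A k c =
  (if k \<le> n \<and> c \<le> n then (if k = a then \<i> * A a c else 0) + (if k = n then - (\<i> * A n c) else 0) else 0)"
proof -
  have "(\<Sum>m\<le>n. hdiag n a k m * A m c) = (\<Sum>m\<le>n. (if m = a then (if k = a then \<i> * A m c else 0) else 0) + (if m = n then (if k = n then - (\<i> * A m c) else 0) else 0))"
    using assms by (intro sum.cong refl) (auto simp: hdiag_entry)
  also have "\<dots> = (if k = a then \<i> * A a c else 0) + (if k = n then - (\<i> * A n c) else 0)"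
    using assms by (simp add: sum.distrib)
  finally show ?thesis unfolding mmul_def by simp
qed

lemma bracket_entry: "bracket n A B k c = (if k \<le> n \<and> c \<le> n then (\<Sum>m\<le>n. A k m * B m c) - (\<Sum>m\<le>n. B k m * A m c) else 0)"
  unfolding bracket_def mmul_def by simp

lemma double_bracket_offdiag_entry: assumes ab: "a < b" "b \<le> n"
  shows "bracket n X (bracket n Y (offdiag n a b u)) a b =
    u * (mmul n X Y a a - X a a * Y b b - Y a a * X b b + mmul n Y X b b) - 2 * (- jsgn n b * cnj u) * (X a b * Y a b)"
proof -
  define v where "v = - jsgn n b * cnj u"
  define W where "W = bracket n Y (offdiag n a b u)"
  have an: "a \<le> n" using ab by simp
  have Wcol: "W k b = Y k a * u - (if k = a then u * Y b b else 0) - (if k = b then v * Y a b else 0)" if "k \<le> n" for k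
    using that ab unfolding W_def bracket_def v_def by (simp add: mmul_offdiag_right mmul_offdiag_left)
  have Wrow: "W a c = (if c = b then Y a a * u else 0) + (if c = a then Y a b * v else 0) - u * Y b c" if "c \<le> n" for c
    using that ab unfolding W_def bracket_def v_def by (simp add: mmul_offdiag_right mmul_offdiag_left)
  have s1: "(\<Sum>k\<le>n. X a k * W k b) = u * mmul n X Y a a - u * (X a a * Y b b) - v * (X a b * Y a b)"
  proof -
    have "(\<Sum>k\<le>n. X a k * W k b) = (\<Sum>k\<le>n. u * (X a k * Y k a) - (if k = a then u * (X a a * Y b b) else 0) - (if k = b then v * (X a b * Y a b) else 0))"
      by (intro sum.cong refl) (auto simp: Wcol algebra_simps)
    also have "\<dots> = u * mmul n X Y a a - u * (X a a * Y b b) - v * (X a b * Y a b)"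
      using ab by (simp add: sum_subtractf sum_distrib_left mmul_def)
    finally show ?thesis .
  qed
  have s2: "(\<Sum>k\<le>n. W a k * X k b) = u * (Y a a * X b b) + v * (X a b * Y a b) - u * mmul n Y X b b"
  proof -
    have "(\<Sum>k\<le>n. W a k * X k b) = (\<Sum>k\<le>n. (if k = b then u * (Y a a * X b b) else 0) + (if k = a then v * (X a b * Y a b) else 0) - u * (Y b k * X k b))"
      by (intro sum.cong refl) (auto simp: Wrow algebra_simps)
    also have "\<dots> = u * (Y a a * X b b) + v * (X a b * Y a b) - u * mmul n Y X b b"
      using ab by (simp add: sum_subtractf sum.distrib sum_distrib_left mmul_def)
    finally show ?thesis .
  qed
  have "bracket n X W a b = (\<Sum>k\<le>n. X a k * W k b) - (\<Sum>k\<le>n. W a k * X k b)"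
    using ab by (simp add: bracket_entry)
  also have "\<dots> = u * (mmul n X Y a a - X a a * Y b b - Y a a * X b b + mmul n Y X b b) - 2 * v * (X a b * Y a b)"
    unfolding s1 s2 by (simp add: algebra_simps)
  finally show ?thesis unfolding W_def v_def .
qed

lemma double_bracket_hdiag_entry: assumes a: "a < n"
  shows "bracket n X (bracket n Y (hdiag n a)) a a =
    \<i> * (mmul n X Y a a - 2 * (X a a * Y a a) + X a n * Y n a + Y a n * X n a + mmul n Y X a a)"
proof -
  define W where "W = bracket n Y (hdiag n a)"
  have Wcol: "W k a = Y k a * \<i> - (if k = a then \<i> * Y a a else 0) + (if k = n then \<i> * Y n a else 0)" if "k \<le> n" for k
    using that a unfolding W_def bracket_def by (simp add: mmul_hdiag_right mmul_hdiag_left)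
  have Wrow: "W a c = (if c = a then Y a a * \<i> else 0) - (if c = n then Y a n * \<i> else 0) - \<i> * Y a c" if "c \<le> n" for c
    using that a unfolding W_def bracket_def by (simp add: mmul_hdiag_right mmul_hdiag_left)
  have s1: "(\<Sum>k\<le>n. X a k * W k a) = \<i> * mmul n X Y a a - \<i> * (X a a * Y a a) + \<i> * (X a n * Y n a)"
  proof -
    have "(\<Sum>k\<le>n. X a k * W k a) = (\<Sum>k\<le>n. \<i> * (X a k * Y k a) - (if k = a then \<i> * (X a a * Y a a) else 0) + (if k = n then \<i> * (X a n * Y n a) else 0))"
      by (intro sum.cong refl) (auto simp: Wcol algebra_simps)
    also have "\<dots> = \<i> * mmul n X Y a a - \<i> * (X a a * Y a a) + \<i> * (X a n * Y n a)"
      using a by (simp add: sum_subtractf sum.distrib sum_distrib_left mmul_def)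
    finally show ?thesis .
  qed
  have s2: "(\<Sum>k\<le>n. W a k * X k a) = \<i> * (X a a * Y a a) - \<i> * (Y a n * X n a) - \<i> * mmul n Y X a a"
  proof -
    have "(\<Sum>k\<le>n. W a k * X k a) = (\<Sum>k\<le>n. (if k = a then \<i> * (X a a * Y a a) else 0) - (if k = n then \<i> * (Y a n * X n a) else 0) - \<i> * (Y a k * X k a))"
      by (intro sum.cong refl) (auto simp: Wrow algebra_simps)
    also have "\<dots> = \<i> * (X a a * Y a a) - \<i> * (Y a n * X n a) - \<i> * mmul n Y X a a"
      using a by (simp add: sum_subtractf sum.distrib sum_distrib_left mmul_def)
    finally show ?thesis .
  qed
  have "bracket n X W a a = (\<Sum>k\<le>n. X a k * W k a) - (\<Sum>k\<le>n. W a k * X k a)"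
    using a by (simp add: bracket_entry)
  also have "\<dots> = \<i> * (mmul n X Y a a - 2 * (X a a * Y a a) + X a n * Y n a + Y a n * X n a + mmul n Y X a a)"
    unfolding s1 s2 by (simp add: algebra_simps)
  finally show ?thesis unfolding W_def .
qed

lemma su_cnj: "X \<in> su n \<Longrightarrow> a \<le> n \<Longrightarrow> b \<le> n \<Longrightarrow> cnj (X a b) = - (jsgn n a * jsgn n b) * X b a"
proof -
  assume h: "X \<in> su n" "a \<le> n" "b \<le> n"
  then have "X b a = - (jsgn n b * jsgn n a) * cnj (X a b)" using su_entry[OF h(1) h(3) h(2)] by simp
  then have "(jsgn n b * jsgn n a) * X b a = - ((jsgn n b * jsgn n a) * (jsgn n b * jsgn n a)) * cnj (X a b)" by simp
  also have "(jsgn n b * jsgn n a) * (jsgn n b * jsgn n a) = 1" using jsgn_sq[of n a] jsgn_sq[of n b] by (simp add: algebra_simps)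
  finally show ?thesis by (simp add: algebra_simps)
qed

lemma bracket_supported: "supported n (bracket n X Y)"
  unfolding supported_def bracket_entry by auto

lemma bracket_su: assumes X: "X \<in> su n" and Y: "Y \<in> su n" shows "bracket n X Y \<in> su n"
  unfolding su_iff
proof (intro conjI)
  show "supported n (bracket n X Y)" by (rule bracket_supported)
  show "su_cond n (bracket n X Y)" unfolding su_cond_def
  proof (intro allI impI)
    fix a b assume a: "a \<le> n" and b: "b \<le> n"
    have c1: "cnj (X b m * Y m a) = (jsgn n a * jsgn n b) * (Y a m * X m b)" if "m \<le> n" for m
      using su_cnj[OF X b that] su_cnj[OF Y that a] jsgn_sq[of n m] by (simp add: algebra_simps)
    have c2: "cnj (Y b m * X m a) = (jsgn n a * jsgn n b) * (X a m * Y m b)" if "m \<le> n" for m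
      using su_cnj[OF Y b that] su_cnj[OF X that a] jsgn_sq[of n m] by (simp add: algebra_simps)
    have e1: "(\<Sum>m\<le>n. cnj (X b m * Y m a)) = (\<Sum>m\<le>n. (jsgn n a * jsgn n b) * (Y a m * X m b))"
      by (intro sum.cong refl c1) simp
    have e2: "(\<Sum>m\<le>n. cnj (Y b m * X m a)) = (\<Sum>m\<le>n. (jsgn n a * jsgn n b) * (X a m * Y m b))"
      by (intro sum.cong refl c2) simp
    have "cnj (bracket n X Y b a) = cnj ((\<Sum>m\<le>n. X b m * Y m a) - (\<Sum>m\<le>n. Y b m * X m a))"
      using a b by (simp add: bracket_entry)
    also have "\<dots> = (\<Sum>m\<le>n. cnj (X b m * Y m a)) - (\<Sum>m\<le>n. cnj (Y b m * X m a))"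
      by (simp only: complex_cnj_diff cnj_sum)
    also have "\<dots> = (jsgn n a * jsgn n b) * ((\<Sum>m\<le>n. Y a m * X m b) - (\<Sum>m\<le>n. X a m * Y m b))"
      unfolding e1 e2 by (simp add: sum_distrib_left right_diff_distrib)
    also have "\<dots> = - (jsgn n a * jsgn n b) * bracket n X Y a b"
      using a b by (simp add: bracket_entry algebra_simps)
    finally have "cnj (bracket n X Y b a) = - (jsgn n a * jsgn n b) * bracket n X Y a b" .
    then have "- (jsgn n a * jsgn n b) * cnj (bracket n X Y b a) = ((jsgn n a * jsgn n b) * (jsgn n a * jsgn n b)) * bracket n X Y a b"
      by (simp add: algebra_simps)
    also have "(jsgn n a * jsgn n b) * (jsgn n a * jsgn n b) = 1" using jsgn_sq[of n a] jsgn_sq[of n b] by (simp add: algebra_simps)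
    finally show "bracket n X Y a b = - (jsgn n a * jsgn n b) * cnj (bracket n X Y b a)" by simp
  qed
  show "(\<Sum>a\<le>n. bracket n X Y a a) = 0"
  proof -
    have "(\<Sum>a\<le>n. bracket n X Y a a) = (\<Sum>a\<le>n. \<Sum>m\<le>n. X a m * Y m a) - (\<Sum>a\<le>n. \<Sum>m\<le>n. Y a m * X m a)"
      by (simp add: bracket_entry sum_subtractf)
    also have "(\<Sum>a\<le>n. \<Sum>m\<le>n. Y a m * X m a) = (\<Sum>a\<le>n. \<Sum>m\<le>n. X a m * Y m a)"
      by (subst sum.swap) (simp add: mult.commute)
    finally show ?thesis by simp
  qed
qed

lemma sbasis_su: assumes "i \<in> sidx n" shows "sbasis n i \<in> su n"
proof -
  obtain a b t where i: "i = (a,b,t)" by (cases i) auto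
  have "a < b \<and> b \<le> n \<or> a = b \<and> a < n \<and> t" using assms unfolding i sidx_def by auto
  then show ?thesis
  proof
    assume ab: "a < b \<and> b \<le> n"
    have "(\<Sum>x\<le>n. offdiag n a b (phase t) x x) = 0" using ab by (intro sum.neutral ballI) (auto simp: offdiag_def)
    moreover have "su_cond n (offdiag n a b (phase t))" using ab unfolding su_cond_def offdiag_def jsgn_def by auto
    moreover have "supported n (offdiag n a b (phase t))" using ab unfolding supported_def offdiag_def by auto
    ultimately show ?thesis using ab unfolding su_iff i sbasis_def by simp
  next
    assume ab: "a = b \<and> a < n \<and> t"
    have "(\<Sum>x\<le>n. hdiag n a x x) = (\<Sum>x\<le>n. (if x = a then \<i> else 0) + (if x = n then - \<i> else 0))"
      using ab by (intro sum.cong refl) (auto simp: hdiag_def)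
    also have "\<dots> = 0" using ab by (simp add: sum.distrib)
    finally have "(\<Sum>x\<le>n. hdiag n a x x) = 0" .
    moreover have "su_cond n (hdiag n a)" using ab unfolding su_cond_def hdiag_def jsgn_def by auto
    moreover have "supported n (hdiag n a)" using ab unfolding supported_def hdiag_def by auto
    ultimately show ?thesis using ab unfolding su_iff i sbasis_def by simp
  qed
qed

lemma killing_eq_sum_sidx: assumes X: "X \<in> su n" and Y: "Y \<in> su n"
  shows "killing n X Y = (\<Sum>i\<in>sidx n. entry_coord i (bracket n X (bracket n Y (sbasis n i))))"
proof -
  have "killing n X Y = (\<Sum>i\<in>sidx n. coord n (bracket n X (bracket n Y (sbasis n i))) (sbasis n i))"
    unfolding killing_def std_basis_eq by (subst sum.reindex[OF inj_on_sbasis]) (simp only: comp_def)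
  also have "\<dots> = (\<Sum>i\<in>sidx n. entry_coord i (bracket n X (bracket n Y (sbasis n i))))"
    by (intro sum.cong refl coord_sbasis bracket_su X Y sbasis_su) auto
  finally show ?thesis .
qed

lemma sum_upper_symmetric: "(\<Sum>b\<le>(n::nat). \<Sum>a<b. (f a b + f b a :: real)) = (\<Sum>a\<le>n. \<Sum>b\<le>n. f a b) - (\<Sum>a\<le>n. f a a)"
proof (induction n)
  case 0 then show ?case by simp
next
  case (Suc n)
  have "(\<Sum>b\<le>Suc n. \<Sum>a<b. f a b + f b a) = (\<Sum>b\<le>n. \<Sum>a<b. f a b + f b a) + (\<Sum>a\<le>n. f a (Suc n) + f (Suc n) a)"
    by (simp add: lessThan_Suc_atMost)
  also have "\<dots> = (\<Sum>a\<le>Suc n. \<Sum>b\<le>Suc n. f a b) - (\<Sum>a\<le>Suc n. f a a)"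
    unfolding Suc.IH by (simp add: sum.distrib)
  finally show ?case .
qed

lemma cnj_product_swap: fixes s t :: complex
  assumes "x = - (s*t) * cnj x'" "y' = -(t*s) * cnj y" "s*s=1" "t*t=1" "cnj s = s" "cnj t = t"
  shows "y * x' = cnj (x * y')"
proof -
  have "cnj (x * y') = (s*s) * (t*t) * (x' * y)" using assms(1,2,5,6) by (simp add: algebra_simps)
  then show ?thesis using assms(3,4) by (simp add: mult.commute)
qed

lemma Re_mmul_diag_commute: assumes X: "X \<in> su n" and Y: "Y \<in> su n" and a: "a \<le> n"
  shows "Re (mmul n Y X a a) = Re (mmul n X Y a a)"
proof -
  have "Y a k * X k a = cnj (X a k * Y k a)" if "k \<le> n" for k
    by (rule cnj_product_swap[OF su_entry[OF X a that] su_entry[OF Y that a]]) (simp_all add: cnj_jsgn)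
  then have r: "Re (Y a k * X k a) = Re (X a k * Y k a)" if "k \<le> n" for k using that by simp
  have "(\<Sum>k\<le>n. Re (Y a k * X k a)) = (\<Sum>k\<le>n. Re (X a k * Y k a))"
    by (intro sum.cong refl r) simp
  then show ?thesis using a unfolding mmul_def by simp
qed

lemma killing_eq_entry_sums: assumes X: "X \<in> su n" and Y: "Y \<in> su n"
  shows "killing n X Y =
    (\<Sum>b\<le>n. \<Sum>a<b. (2 * Re (mmul n X Y a a) - 2 * Re (X a a * Y b b))
                   + (2 * Re (mmul n X Y b b) - 2 * Re (X b b * Y a a)))
  + (\<Sum>a<n. 2 * Re (mmul n X Y a a) - 2 * Re (X a a * Y a a) + 2 * Re (X n a * Y a n))"
proof -
  define P where "P a b = mmul n X Y a a - X a a * Y b b - Y a a * X b b + mmul n Y X b b" for a b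
  define Q where "Q a = mmul n X Y a a - 2 * (X a a * Y a a) + X a n * Y n a + Y a n * X n a + mmul n Y X a a" for a
  define T where "T i = bracket n X (bracket n Y (sbasis n i))" for i
  have YX: "Re (mmul n Y X a a) = Re (mmul n X Y a a)" if "a \<le> n" for a
    by (rule Re_mmul_diag_commute[OF X Y that])
  have off: "Re (T (a,b,False) a b) + Im (T (a,b,True) a b) =
      (2 * Re (mmul n X Y a a) - 2 * Re (X a a * Y b b)) + (2 * Re (mmul n X Y b b) - 2 * Re (X b b * Y a a))"
    if "a < b" "b \<le> n" for a b
  proof -
    have "T (a,b,False) a b = P a b - 2 * (- jsgn n b) * (X a b * Y a b)"
      using that unfolding T_def P_def by (simp add: sbasis_def phase_def double_bracket_offdiag_entry)
    moreover have "T (a,b,True) a b = \<i> * P a b - 2 * (- jsgn n b * (- \<i>)) * (X a b * Y a b)"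
      using that unfolding T_def P_def by (simp add: sbasis_def phase_def double_bracket_offdiag_entry)
    ultimately have "Re (T (a,b,False) a b) + Im (T (a,b,True) a b) = 2 * Re (P a b)"
      using jsgn_cases[of n b] by (elim disjE) simp_all
    then show ?thesis unfolding P_def using YX[of b] that by (simp add: mult.commute)
  qed
  have diag: "Im (T (a,a,True) a a) = 2 * Re (mmul n X Y a a) - 2 * Re (X a a * Y a a) + 2 * Re (X n a * Y a n)"
    if "a < n" for a
  proof -
    have "X a n = cnj (X n a)" using su_entry[OF X, of a n] that by (simp add: jsgn_def)
    moreover have "Y n a = cnj (Y a n)" using su_entry[OF Y, of n a] that by (simp add: jsgn_def)
    ultimately have "Re (X a n * Y n a) = Re (X n a * Y a n)" by simp
    moreover have "Im (T (a,a,True) a a) = Re (Q a)"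
      using that unfolding T_def Q_def by (simp add: sbasis_def double_bracket_hdiag_entry)
    ultimately show ?thesis unfolding Q_def using YX[of a] that by (simp add: mult.commute)
  qed
  have "killing n X Y = (\<Sum>b\<le>n. \<Sum>a<b. Re (T (a,b,False) a b) + Im (T (a,b,True) a b))
      + (\<Sum>a<n. Im (T (a,a,True) a a))"
    unfolding killing_eq_sum_sidx[OF X Y] sum_sidx T_def by (simp add: entry_coord_def)
  moreover have "(\<Sum>b\<le>n. \<Sum>a<b. Re (T (a,b,False) a b) + Im (T (a,b,True) a b)) =
      (\<Sum>b\<le>n. \<Sum>a<b. (2 * Re (mmul n X Y a a) - 2 * Re (X a a * Y b b))
                   + (2 * Re (mmul n X Y b b) - 2 * Re (X b b * Y a a)))"
    using off by (intro sum.cong refl) auto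
  moreover have "(\<Sum>a<n. Im (T (a,a,True) a a)) =
      (\<Sum>a<n. 2 * Re (mmul n X Y a a) - 2 * Re (X a a * Y a a) + 2 * Re (X n a * Y a n))"
    using diag by (intro sum.cong refl) auto
  ultimately show ?thesis by simp
qed

lemma killing_eq_trace: assumes X: "X \<in> su n" and Y: "Y \<in> su n"
  shows "killing n X Y = 2 * real (n + 1) * (\<Sum>a\<le>n. Re (mmul n X Y a a))"
proof -
  define R where "R a = Re (mmul n X Y a a)" for a
  define D where "D a = Re (X a a * Y a a)" for a
  define N where "N a = Re (X n a * Y a n)" for a
  define g where "g a b = 2 * R a - 2 * Re (X a a * Y b b)" for a b
  have tr0: "(\<Sum>a\<le>n. \<Sum>b\<le>n. Re (X a a * Y b b)) = 0"
  proof -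
    have "(\<Sum>a\<le>n. \<Sum>b\<le>n. Re (X a a * Y b b)) = Re ((\<Sum>a\<le>n. X a a) * (\<Sum>b\<le>n. Y b b))"
      by (simp only: sum_product Re_sum)
    then show ?thesis by (simp add: su_trace[OF X])
  qed
  have "(\<Sum>b\<le>n. \<Sum>a<b. g a b + g b a) = (\<Sum>a\<le>n. \<Sum>b\<le>n. g a b) - (\<Sum>a\<le>n. g a a)"
    by (rule sum_upper_symmetric)
  also have "(\<Sum>a\<le>n. \<Sum>b\<le>n. g a b) = 2 * real (n+1) * (\<Sum>a\<le>n. R a)"
    unfolding g_def using tr0 by (simp add: sum_subtractf sum_distrib_left[symmetric] sum.distrib)
  finally have off: "(\<Sum>b\<le>n. \<Sum>a<b. g a b + g b a) = 2 * real (n+1) * (\<Sum>a\<le>n. R a) - (\<Sum>a\<le>n. 2 * R a - 2 * D a)"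
    unfolding g_def D_def by simp
  have Rn: "R n = (\<Sum>a<n. N a) + D n"
    unfolding R_def N_def D_def mmul_def by (simp add: lessThan_Suc_atMost[symmetric])
  have "killing n X Y = (\<Sum>b\<le>n. \<Sum>a<b. g a b + g b a) + (\<Sum>a<n. 2 * R a - 2 * D a + 2 * N a)"
    unfolding killing_eq_entry_sums[OF X Y] g_def R_def D_def N_def ..
  also have "\<dots> = 2 * real (n+1) * (\<Sum>a\<le>n. R a) - (\<Sum>a\<le>n. 2 * R a - 2 * D a)
      + (\<Sum>a<n. 2 * R a - 2 * D a + 2 * N a)"
    unfolding off ..
  also have "\<dots> = 2 * real (n+1) * (\<Sum>a\<le>n. R a)"
    unfolding lessThan_Suc_atMost[symmetric] sum.lessThan_Suc
    using Rn by (simp add: sum.distrib sum_subtractf sum_distrib_left[symmetric])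
  finally show ?thesis unfolding R_def .
qed

section \<open>The metric as a Frobenius inner product\<close>

definition frob :: "nat \<Rightarrow> cmat \<Rightarrow> cmat \<Rightarrow> real" where
  "frob n X Y = 2 * (\<Sum>a\<le>n. \<Sum>b\<le>n. Re (X a b * cnj (Y a b)))"

definition kproj :: "nat \<Rightarrow> cmat \<Rightarrow> cmat" where
  "kproj n X = (\<lambda>a b. if (a < n \<and> b < n) \<or> (a = n \<and> b = n) then X a b else 0)"

definition pproj :: "nat \<Rightarrow> cmat \<Rightarrow> cmat" where
  "pproj n X = (\<lambda>a b. if (a < n \<and> b = n) \<or> (a = n \<and> b < n) then X a b else 0)"

lemma kproj_su: assumes X: "X \<in> su n" shows "kproj n X \<in> su n"
  unfolding su_iff
proof (intro conjI)
  show "supported n (kproj n X)" unfolding supported_def kproj_def by auto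
  show "su_cond n (kproj n X)" unfolding su_cond_def kproj_def
    using su_cnj[OF X] by (auto simp: jsgn_def)
  have "(\<Sum>a\<le>n. kproj n X a a) = (\<Sum>a\<le>n. X a a)"
    by (intro sum.cong refl) (auto simp: kproj_def)
  then show "(\<Sum>a\<le>n. kproj n X a a) = 0" using su_trace[OF X] by simp
qed

lemma pproj_su: assumes X: "X \<in> su n" shows "pproj n X \<in> su n"
  unfolding su_iff
proof (intro conjI)
  show "supported n (pproj n X)" unfolding supported_def pproj_def by auto
  show "su_cond n (pproj n X)" unfolding su_cond_def pproj_def
    using su_cnj[OF X] by (auto simp: jsgn_def)
  show "(\<Sum>a\<le>n. pproj n X a a) = 0"
    by (intro sum.neutral ballI) (auto simp: pproj_def)
qed

lemma entry_coord_kproj: "i \<in> kidx n \<Longrightarrow> entry_coord i (kproj n X) = entry_coord i X"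
  unfolding kidx_def entry_coord_def kproj_def by auto

lemma entry_coord_kproj_pidx: "i \<in> pidx n \<Longrightarrow> entry_coord i (kproj n X) = 0"
  unfolding pidx_def entry_coord_def kproj_def by auto

lemma entry_coord_pproj: "i \<in> pidx n \<Longrightarrow> entry_coord i (pproj n X) = entry_coord i X"
  unfolding pidx_def entry_coord_def pproj_def by auto

lemma entry_coord_pproj_kidx: "i \<in> kidx n \<Longrightarrow> entry_coord i (pproj n X) = 0"
  unfolding kidx_def entry_coord_def pproj_def by auto

lemma sum_coord_sbasis_image:
  assumes X: "X \<in> su n" and R: "R \<in> su n" and S: "S \<subseteq> sidx n"
    and coords: "\<And>i. i \<in> sidx n \<Longrightarrow> entry_coord i R = (if i \<in> S then entry_coord i X else 0)"
  shows "(\<Sum>E\<in>sbasis n ` S. smul (complex_of_real (coord n X E)) E) = R"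
proof -
  have inj: "inj_on (sbasis n) S" using inj_on_sbasis S by (rule inj_on_subset)
  have "(\<Sum>E\<in>sbasis n ` S. smul (complex_of_real (coord n X E)) E)
      = (\<Sum>i\<in>S. smul (complex_of_real (coord n X (sbasis n i))) (sbasis n i))"
    by (simp add: sum.reindex[OF inj])
  also have "\<dots> = lincomb n (\<lambda>i. entry_coord i R)"
    unfolding lincomb_def using S coords
    by (intro sum.mono_neutral_cong_left) (auto simp: coord_sbasis[OF X] smul_def zero_fun_def)
  also have "\<dots> = R" by (rule lincomb_entry_coord[OF R])
  finally show ?thesis .
qed

lemma kpart_eq_kproj: "X \<in> su n \<Longrightarrow> kpart n X = kproj n X"
  unfolding kpart_def kbasis_eq using kidx_pidx_disjoint[of n]
  by (intro sum_coord_sbasis_image kproj_su)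
    (auto simp: sidx_split entry_coord_kproj entry_coord_kproj_pidx)

lemma ppart_eq_pproj: "X \<in> su n \<Longrightarrow> ppart n X = pproj n X"
  unfolding ppart_def pbasis_eq using kidx_pidx_disjoint[of n]
  by (intro sum_coord_sbasis_image pproj_su)
    (auto simp: sidx_split entry_coord_pproj entry_coord_pproj_kidx)

lemma gt_eq_frob: assumes X: "X \<in> su n" and Y: "Y \<in> su n" shows "gt n X Y = frob n X Y"
proof -
  txt \<open>Y_ma is -cnj Y_am on the k-block and cnj Y_am on the p-block.\<close>
  have pt: "Re (pproj n X a m * pproj n Y m a) - Re (kproj n X a m * kproj n Y m a) = Re (X a m * cnj (Y a m))"
    if "a \<le> n" "m \<le> n" for a m
  proof -
    have e: "cnj (Y a m) = - (jsgn n a * jsgn n m) * Y m a" by (rule su_cnj[OF Y that])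
    show ?thesis using that unfolding e pproj_def kproj_def jsgn_def
      by (cases "a = n"; cases "m = n") auto
  qed
  have "gt n X Y = (killing n (pproj n X) (pproj n Y) - killing n (kproj n X) (kproj n Y)) / real (n+1)"
    unfolding gt_def gcan_def ppart_eq_pproj[OF X] ppart_eq_pproj[OF Y] kpart_eq_kproj[OF X] kpart_eq_kproj[OF Y] ..
  also have "\<dots> = 2 * ((\<Sum>a\<le>n. Re (mmul n (pproj n X) (pproj n Y) a a)) - (\<Sum>a\<le>n. Re (mmul n (kproj n X) (kproj n Y) a a)))"
    unfolding killing_eq_trace[OF pproj_su[OF X] pproj_su[OF Y]] killing_eq_trace[OF kproj_su[OF X] kproj_su[OF Y]]
    by (simp add: field_simps)
  also have "\<dots> = 2 * (\<Sum>a\<le>n. \<Sum>m\<le>n. Re (pproj n X a m * pproj n Y m a) - Re (kproj n X a m * kproj n Y m a))"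
    unfolding mmul_def by (simp add: sum_subtractf)
  also have "\<dots> = frob n X Y"
    unfolding frob_def using pt by (intro arg_cong[where f = "\<lambda>x. 2 * x"] sum.cong refl) auto
  finally show ?thesis .
qed

section \<open>The Levi-Civita connection\<close>

definition theta :: "nat \<Rightarrow> cmat \<Rightarrow> cmat" where
  "theta n A = (\<lambda>a b. jsgn n a * jsgn n b * A a b)"

lemma cnj_theta: assumes A: "A \<in> su n" and "a \<le> n" "k \<le> n" shows "cnj (theta n A a k) = - A k a"
proof -
  have "cnj (theta n A a k) = jsgn n a * jsgn n k * cnj (A a k)" unfolding theta_def by (simp add: cnj_jsgn)
  also have "cnj (A a k) = - (jsgn n a * jsgn n k) * A k a" by (rule su_cnj[OF A assms(2,3)])
  finally show ?thesis by (simp add: jsgn_def)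
qed

lemma sum_rotate3: "(\<Sum>a\<in>S. \<Sum>b\<in>S. \<Sum>k\<in>S. f k a b) = (\<Sum>a\<in>S. \<Sum>b\<in>S. \<Sum>k\<in>S. f a k b)"
proof -
  have "(\<Sum>a\<in>S. \<Sum>b\<in>S. \<Sum>k\<in>S. f k a b) = (\<Sum>b\<in>S. \<Sum>a\<in>S. \<Sum>k\<in>S. f k a b)" by (rule sum.swap)
  also have "\<dots> = (\<Sum>b\<in>S. \<Sum>k\<in>S. \<Sum>a\<in>S. f k a b)" by (rule sum.cong[OF refl], rule sum.swap)
  also have "\<dots> = (\<Sum>a\<in>S. \<Sum>b\<in>S. \<Sum>k\<in>S. f a k b)" by (rule sum.swap)
  finally show ?thesis .
qed

lemma sum_swap_inner: "(\<Sum>a\<in>S. \<Sum>b\<in>S. \<Sum>k\<in>S. f a k b) = (\<Sum>a\<in>S. \<Sum>b\<in>S. \<Sum>k\<in>S. f a b k)"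
  by (rule sum.cong[OF refl], rule sum.swap)

lemma cnj_bracket_theta_entry: assumes A: "A \<in> su n" and "a \<le> n" "b \<le> n"
  shows "cnj (bracket n (theta n A) C a b) = - (\<Sum>k\<le>n. A k a * cnj (C k b)) + (\<Sum>k\<le>n. cnj (C a k) * A b k)"
proof -
  have "(\<Sum>k\<le>n. cnj (theta n A a k) * cnj (C k b)) = (\<Sum>k\<le>n. - (A k a * cnj (C k b)))"
    using assms by (intro sum.cong refl) (simp add: cnj_theta)
  moreover have "(\<Sum>k\<le>n. cnj (C a k) * cnj (theta n A k b)) = (\<Sum>k\<le>n. - (cnj (C a k) * A b k))"
    using assms by (intro sum.cong refl) (simp add: cnj_theta)
  ultimately show ?thesis using assms by (simp add: bracket_entry sum_negf)
qed

lemma frob_bracket_adjoint: assumes A: "A \<in> su n"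
  shows "frob n (bracket n A B) C = - frob n B (bracket n (theta n A) C)"
proof -
  define T1 where "T1 = (\<Sum>a\<le>n. \<Sum>b\<le>n. \<Sum>k\<le>n. Re (A a k * B k b * cnj (C a b)))"
  define T2 where "T2 = (\<Sum>a\<le>n. \<Sum>b\<le>n. \<Sum>k\<le>n. Re (B a k * A k b * cnj (C a b)))"
  have "(\<Sum>a\<le>n. \<Sum>b\<le>n. Re (bracket n A B a b * cnj (C a b))) =
        (\<Sum>a\<le>n. \<Sum>b\<le>n. (\<Sum>k\<le>n. Re (A a k * B k b * cnj (C a b))) - (\<Sum>k\<le>n. Re (B a k * A k b * cnj (C a b))))"
    by (intro sum.cong refl) (simp add: bracket_entry left_diff_distrib sum_distrib_right)
  then have L: "(\<Sum>a\<le>n. \<Sum>b\<le>n. Re (bracket n A B a b * cnj (C a b))) = T1 - T2"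
    unfolding T1_def T2_def by (simp add: sum_subtractf)
  have "(\<Sum>a\<le>n. \<Sum>b\<le>n. Re (B a b * cnj (bracket n (theta n A) C a b))) =
      (\<Sum>a\<le>n. \<Sum>b\<le>n. - (\<Sum>k\<le>n. Re (A k a * B a b * cnj (C k b))) + (\<Sum>k\<le>n. Re (B a b * A b k * cnj (C a k))))"
  proof (intro sum.cong refl)
    fix a b assume "a \<in> {..n}" "b \<in> {..n}"
    then have "B a b * cnj (bracket n (theta n A) C a b) =
        - (\<Sum>k\<le>n. A k a * B a b * cnj (C k b)) + (\<Sum>k\<le>n. B a b * A b k * cnj (C a k))"
      by (simp add: cnj_bracket_theta_entry[OF A] right_diff_distrib sum_distrib_left mult_ac)
    then show "Re (B a b * cnj (bracket n (theta n A) C a b)) =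
        - (\<Sum>k\<le>n. Re (A k a * B a b * cnj (C k b))) + (\<Sum>k\<le>n. Re (B a b * A b k * cnj (C a k)))"
      by (simp only: plus_complex.sel uminus_complex.sel Re_sum)
  qed
  also have "\<dots> = - T1 + T2"
    unfolding T1_def T2_def sum.distrib sum_negf
    using sum_rotate3[where f = "\<lambda>x y z. Re (A x y * B y z * cnj (C x z))"]
      sum_swap_inner[where f = "\<lambda>x y z. Re (B x y * A y z * cnj (C x z))"] by simp
  finally show ?thesis unfolding frob_def L by simp
qed

lemma su_add: assumes A: "A \<in> su n" and B: "B \<in> su n" shows "A + B \<in> su n"
  unfolding su_iff
proof (intro conjI)
  show "supported n (A + B)" using su_supported[OF A] su_supported[OF B] unfolding supported_def by auto
  show "su_cond n (A + B)" unfolding su_cond_def using su_cnj[OF A] su_cnj[OF B] by (auto simp: jsgn_def)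
  show "(\<Sum>a\<le>n. (A + B) a a) = 0" using su_trace[OF A] su_trace[OF B] by (simp add: sum.distrib)
qed

lemma su_uminus: assumes A: "A \<in> su n" shows "- A \<in> su n"
  unfolding su_iff
proof (intro conjI)
  show "supported n (- A)" using su_supported[OF A] unfolding supported_def by auto
  show "su_cond n (- A)" unfolding su_cond_def using su_cnj[OF A] by (auto simp: jsgn_def)
  show "(\<Sum>a\<le>n. (- A) a a) = 0" using su_trace[OF A] by (simp add: sum_negf)
qed

lemma su_diff: assumes "A \<in> su n" "B \<in> su n" shows "A - B \<in> su n"
  using su_add[OF assms(1) su_uminus[OF assms(2)]] by (simp add: fun_diff_def)

lemma su_smul: assumes A: "A \<in> su n" shows "smul (complex_of_real r) A \<in> su n"
  unfolding su_iff
proof (intro conjI)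
  show "supported n (smul (complex_of_real r) A)" using su_supported[OF A] unfolding supported_def smul_def by auto
  show "su_cond n (smul (complex_of_real r) A)" unfolding su_cond_def smul_def using su_cnj[OF A] by (auto simp: jsgn_def)
  show "(\<Sum>a\<le>n. smul (complex_of_real r) A a a) = 0" using su_trace[OF A] by (simp add: smul_def sum_distrib_left[symmetric])
qed

lemma su_zero: "0 \<in> su n"
  unfolding su_iff supported_def su_cond_def by simp

lemma theta_su: assumes A: "A \<in> su n" shows "theta n A \<in> su n"
  unfolding su_iff
proof (intro conjI)
  show "supported n (theta n A)" using su_supported[OF A] unfolding supported_def theta_def by auto
  show "su_cond n (theta n A)" unfolding su_cond_def theta_def
    using su_cnj[OF A] by (auto simp: jsgn_def)
  have "(\<Sum>a\<le>n. theta n A a a) = (\<Sum>a\<le>n. A a a)" by (intro sum.cong refl) (simp add: theta_def jsgn_def)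
  then show "(\<Sum>a\<le>n. theta n A a a) = 0" using su_trace[OF A] by simp
qed

lemma frob_add: "frob n (A + B) C = frob n A C + frob n B C"
  unfolding frob_def by (simp add: distrib_right sum.distrib)

lemma frob_uminus: "frob n (- A) C = - frob n A C"
proof -
  have t: "\<And>a b. Re ((- A) a b * cnj (C a b)) = - Re (A a b * cnj (C a b))" by simp
  show ?thesis unfolding frob_def t sum_negf by simp
qed

lemma frob_diff: "frob n (A - B) C = frob n A C - frob n B C"
  unfolding frob_def by (simp add: left_diff_distrib sum_subtractf)

lemma frob_smul: "frob n (smul (complex_of_real r) A) C = r * frob n A C"
proof -
  have t: "\<And>a b. Re (smul (complex_of_real r) A a b * cnj (C a b)) = r * Re (A a b * cnj (C a b))"
    by (simp add: smul_def algebra_simps)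
  show ?thesis unfolding frob_def t by (simp add: sum_distrib_left mult_ac)
qed

lemma frob_commute: "frob n A B = frob n B A"
  unfolding frob_def by (simp add: mult.commute)

lemma frob_self_eq_0: assumes A: "A \<in> su n" and z: "frob n A A = 0" shows "A = 0"
proof -
  have nn: "\<And>a b. 0 \<le> Re (A a b * cnj (A a b))" by (simp add: complex_mult_cnj)
  have "(\<Sum>a\<le>n. \<Sum>b\<le>n. Re (A a b * cnj (A a b))) = 0" using z unfolding frob_def by simp
  then have "\<forall>a\<in>{..n}. (\<Sum>b\<le>n. Re (A a b * cnj (A a b))) = 0"
    by (subst (asm) sum_nonneg_eq_0_iff) (auto intro: sum_nonneg nn)
  then have "\<forall>a\<in>{..n}. \<forall>b\<in>{..n}. Re (A a b * cnj (A a b)) = 0"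
    by (auto simp: sum_nonneg_eq_0_iff nn)
  then have e: "A a b = 0" if "a \<le> n" "b \<le> n" for a b
    using that by (auto simp: complex_mult_cnj complex_eq_iff sum_power2_eq_zero_iff)
  show ?thesis
  proof (intro ext)
    fix a b show "A a b = 0 a b"
      using e[of a b] su_supported[OF A, of a b] by (cases "a \<le> n \<and> b \<le> n") auto
  qed
qed

lemma bracket_antisym: "bracket n B A = - bracket n A B"
  unfolding bracket_def by simp

definition koszul :: "nat \<Rightarrow> cmat \<Rightarrow> cmat \<Rightarrow> cmat" where
  "koszul n X Y = smul (complex_of_real (1/2)) (bracket n X Y + bracket n (theta n Y) X + bracket n (theta n X) Y)"

lemma koszul_su: "X \<in> su n \<Longrightarrow> Y \<in> su n \<Longrightarrow> koszul n X Y \<in> su n"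
  unfolding koszul_def by (intro su_smul su_add bracket_su theta_su)

lemma koszul_frob: assumes X: "X \<in> su n" and Y: "Y \<in> su n"
  shows "2 * frob n (koszul n X Y) W = frob n (bracket n X Y) W - frob n (bracket n Y W) X + frob n (bracket n W X) Y"
proof -
  have "2 * frob n (koszul n X Y) W = frob n (bracket n X Y) W + frob n (bracket n (theta n Y) X) W + frob n (bracket n (theta n X) Y) W"
    unfolding koszul_def frob_smul frob_add by simp
  also have "frob n (bracket n (theta n Y) X) W = - frob n (bracket n Y W) X"
    using frob_bracket_adjoint[OF Y, of W X] frob_commute[of n W] by simp
  also have "frob n (bracket n (theta n X) Y) W = frob n (bracket n W X) Y"
    using frob_bracket_adjoint[OF X, of W Y] frob_commute[of n W] bracket_antisym[of n W X] frob_uminus by simp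
  finally show ?thesis by simp
qed

lemma nabla_eq_koszul: assumes X: "X \<in> su n" and Y: "Y \<in> su n" shows "nabla n X Y = koszul n X Y"
  unfolding nabla_def
proof (rule the_equality)
  show "koszul n X Y \<in> su n \<and> (\<forall>W\<in>su n. 2 * gt n (koszul n X Y) W = gt n (bracket n X Y) W - gt n (bracket n Y W) X + gt n (bracket n W X) Y)"
    using koszul_su[OF X Y] koszul_frob[OF X Y] by (simp add: gt_eq_frob bracket_su X Y)
next
  fix Z assume h: "Z \<in> su n \<and> (\<forall>W\<in>su n. 2 * gt n Z W = gt n (bracket n X Y) W - gt n (bracket n Y W) X + gt n (bracket n W X) Y)"
  then have Z: "Z \<in> su n" by simp
  have "2 * frob n Z W = 2 * frob n (koszul n X Y) W" if W: "W \<in> su n" for W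
    using h W koszul_frob[OF X Y, of W] by (simp add: gt_eq_frob bracket_su X Y Z)
  then have "frob n (Z - koszul n X Y) W = 0" if "W \<in> su n" for W
    using that by (simp add: frob_diff)
  then have "frob n (Z - koszul n X Y) (Z - koszul n X Y) = 0" using su_diff[OF Z koszul_su[OF X Y]] by blast
  then have "Z - koszul n X Y = 0" by (rule frob_self_eq_0[OF su_diff[OF Z koszul_su[OF X Y]]])
  then show "Z = koszul n X Y" by simp
qed

section \<open>Curvature of \<theta>-eigenvectors\<close>

lemma mmul_smul_l: "mmul n (smul c A) B = smul c (mmul n A B)"
  unfolding mmul_def smul_def by (auto simp: fun_eq_iff sum_distrib_left mult_ac)

lemma mmul_smul_r: "mmul n A (smul c B) = smul c (mmul n A B)"
  unfolding mmul_def smul_def by (auto simp: fun_eq_iff sum_distrib_left mult_ac)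

lemma bracket_smul_l: "bracket n (smul c A) B = smul c (bracket n A B)"
  unfolding bracket_def mmul_smul_l mmul_smul_r by (simp add: smul_def fun_eq_iff algebra_simps)

lemma bracket_smul_r: "bracket n A (smul c B) = smul c (bracket n A B)"
  unfolding bracket_def mmul_smul_l mmul_smul_r by (simp add: smul_def fun_eq_iff algebra_simps)

lemma bracket_self: "bracket n A A = 0"
  unfolding bracket_def by simp

lemma bracket_zero_r: "bracket n A 0 = 0"
  unfolding bracket_def mmul_def by (simp add: fun_eq_iff)

lemma bracket_zero_l: "bracket n 0 A = 0"
  unfolding bracket_def mmul_def by (simp add: fun_eq_iff)

lemma theta_zero: "theta n 0 = 0"
  unfolding theta_def by (simp add: fun_eq_iff)

lemma theta_smul: "theta n (smul c A) = smul c (theta n A)"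
  unfolding theta_def smul_def by (simp add: fun_eq_iff mult_ac)

lemma theta_mmul: "theta n (mmul n A B) = mmul n (theta n A) (theta n B)"
proof (intro ext)
  fix a b
  have "(\<Sum>k\<le>n. jsgn n a * jsgn n k * A a k * (jsgn n k * jsgn n b * B k b)) = (\<Sum>k\<le>n. jsgn n a * jsgn n b * (A a k * B k b))"
    by (intro sum.cong refl) (simp add: jsgn_def)
  then show "theta n (mmul n A B) a b = mmul n (theta n A) (theta n B) a b"
    unfolding theta_def mmul_def by (simp add: sum_distrib_left)
qed

lemma theta_bracket: "theta n (bracket n A B) = bracket n (theta n A) (theta n B)"
proof -
  have "theta n (bracket n A B) = theta n (mmul n A B) - theta n (mmul n B A)"
    unfolding bracket_def theta_def by (simp add: fun_eq_iff algebra_simps)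
  then show ?thesis unfolding theta_mmul bracket_def .
qed

lemma koszul_self: assumes "theta n Y = smul (complex_of_real d) Y" shows "koszul n Y Y = 0"
  unfolding koszul_def assms bracket_smul_l bracket_self by (simp add: smul_def fun_eq_iff)

lemma koszul_zero: "koszul n X 0 = 0"
  unfolding koszul_def bracket_zero_r bracket_zero_l theta_zero by (simp add: smul_def fun_eq_iff)

lemma gt_curv_eq:
  assumes X: "X \<in> su n" and Y: "Y \<in> su n"
    and tX: "theta n X = smul (complex_of_real e) X" and tY: "theta n Y = smul (complex_of_real d) Y"
  shows "gt n (curv n X Y Y) X =
    (- ((1 - d + e) / 2) * (1 - e * d + d) / 2 - (- 1 + d - e * d) / 2) * d * frob n (bracket n X Y) (bracket n X Y)"
proof -
  define Z where "Z = bracket n X Y"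
  define W where "W = bracket n Y Z"
  define c where "c = (1 - d + e) / 2"
  have Z: "Z \<in> su n" unfolding Z_def by (rule bracket_su[OF X Y])
  have YX: "bracket n Y X = - Z" unfolding Z_def by (rule bracket_antisym)
  have ZY: "bracket n Z Y = - W" unfolding W_def by (rule bracket_antisym)
  have tZ: "theta n Z = smul (complex_of_real (e * d)) Z"
    unfolding Z_def theta_bracket tX tY bracket_smul_l bracket_smul_r by (simp add: smul_def fun_eq_iff)
  have n1: "nabla n Y Y = 0" unfolding nabla_eq_koszul[OF Y Y] by (rule koszul_self[OF tY])
  have n2: "nabla n X 0 = 0" unfolding nabla_eq_koszul[OF X su_zero] by (rule koszul_zero)
  have n3: "nabla n X Y = smul (complex_of_real c) Z"
    unfolding nabla_eq_koszul[OF X Y] koszul_def tX tY bracket_smul_l YX c_def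
    by (simp add: Z_def[symmetric] smul_def fun_eq_iff algebra_simps)
  have cZ: "smul (complex_of_real c) Z \<in> su n" by (rule su_smul[OF Z])
  have n4: "nabla n Y (smul (complex_of_real c) Z) = smul (complex_of_real (c * (1 - e * d + d) / 2)) W"
    unfolding nabla_eq_koszul[OF Y cZ] koszul_def theta_smul tZ tY bracket_smul_l bracket_smul_r ZY
    by (simp add: W_def[symmetric] smul_def fun_eq_iff algebra_simps)
  have n5: "nabla n Z Y = smul (complex_of_real ((- 1 + d - e * d) / 2)) W"
    unfolding nabla_eq_koszul[OF Z Y] koszul_def tZ tY bracket_smul_l bracket_smul_r ZY
    by (simp add: W_def[symmetric] smul_def fun_eq_iff algebra_simps)
  have cv: "curv n X Y Y = smul (complex_of_real (- (c * (1 - e * d + d) / 2) - (- 1 + d - e * d) / 2)) W"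
    unfolding curv_def n1 n2 n3 n4 Z_def[symmetric] n5 by (simp add: smul_def fun_eq_iff algebra_simps)
  have W: "W \<in> su n" unfolding W_def by (rule bracket_su[OF Y Z])
  have "frob n W X = - frob n Z (bracket n (theta n Y) X)" unfolding W_def by (rule frob_bracket_adjoint[OF Y])
  also have "bracket n (theta n Y) X = smul (complex_of_real (- d)) Z"
    unfolding tY bracket_smul_l YX by (simp add: smul_def fun_eq_iff)
  also have "frob n Z (smul (complex_of_real (- d)) Z) = - d * frob n Z Z"
    by (subst frob_commute) (rule frob_smul)
  finally have iW: "frob n W X = d * frob n Z Z" by simp
  have "gt n (curv n X Y Y) X = frob n (curv n X Y Y) X"
    unfolding cv by (rule gt_eq_frob[OF su_smul[OF W] X])
  also have "\<dots> = (- (c * (1 - e * d + d) / 2) - (- 1 + d - e * d) / 2) * (d * frob n Z Z)"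
    unfolding cv frob_smul iW ..
  finally show ?thesis unfolding c_def Z_def by (simp add: algebra_simps)
qed

section \<open>Inner products and norms of basis elements\<close>

lemma theta_sbasis: assumes "i \<in> sidx n"
  shows "theta n (sbasis n i) = smul (complex_of_real (if i \<in> pidx n then -1 else 1)) (sbasis n i)"
proof -
  obtain a b t where i: "i = (a,b,t)" by (cases i) auto
  have "a < b \<and> b \<le> n \<or> a = b \<and> a < n \<and> t" using assms unfolding i sidx_def by auto
  then show ?thesis
    unfolding i theta_def smul_def sbasis_def pidx_def offdiag_def hdiag_def jsgn_def
    by (auto simp: fun_eq_iff)
qed

lemma sum_sum_delta: "(\<Sum>x\<le>(n::nat). \<Sum>y\<le>n. (if x = a \<and> y = b then f x y else 0 :: real)) = (if a \<le> n \<and> b \<le> n then f a b else 0)"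
proof -
  have "(\<Sum>x\<le>n. \<Sum>y\<le>n. (if x = a \<and> y = b then f x y else 0 :: real)) = (\<Sum>x\<le>n. if x = a then (if b \<le> n then f a b else 0) else 0)"
    by (intro sum.cong refl) (auto simp: sum.delta)
  then show ?thesis by (simp add: sum.delta)
qed

lemma frob_offdiag: assumes "a < b" "b \<le> n"
  shows "frob n (offdiag n a b u) Q = 2 * (Re (u * cnj (Q a b)) + Re ((- jsgn n b * cnj u) * cnj (Q b a)))"
proof -
  have "(\<Sum>x\<le>n. \<Sum>y\<le>n. Re (offdiag n a b u x y * cnj (Q x y))) =
     (\<Sum>x\<le>n. \<Sum>y\<le>n. (if x = a \<and> y = b then Re (u * cnj (Q x y)) else 0) + (if x = b \<and> y = a then Re ((- jsgn n b * cnj u) * cnj (Q x y)) else 0))"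
    using assms by (intro sum.cong refl) (auto simp: offdiag_entry algebra_simps)
  also have "\<dots> = Re (u * cnj (Q a b)) + Re ((- jsgn n b * cnj u) * cnj (Q b a))"
    using assms by (simp only: sum.distrib sum_sum_delta) simp
  finally show ?thesis unfolding frob_def by simp
qed

lemma frob_hdiag: assumes "a < n"
  shows "frob n (hdiag n a) Q = 2 * (Re (\<i> * cnj (Q a a)) + Re ((- \<i>) * cnj (Q n n)))"
proof -
  have "(\<Sum>x\<le>n. \<Sum>y\<le>n. Re (hdiag n a x y * cnj (Q x y))) =
     (\<Sum>x\<le>n. \<Sum>y\<le>n. (if x = a \<and> y = a then Re (\<i> * cnj (Q x y)) else 0) + (if x = n \<and> y = n then Re ((- \<i>) * cnj (Q x y)) else 0))"
    using assms by (intro sum.cong refl) (auto simp: hdiag_entry)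
  also have "\<dots> = Re (\<i> * cnj (Q a a)) + Re ((- \<i>) * cnj (Q n n))"
    using assms by (simp only: sum.distrib sum_sum_delta) simp
  finally show ?thesis unfolding frob_def by simp
qed

lemma frob_sbasis: assumes i: "i \<in> sidx n" and j: "j \<in> sidx n"
  shows "frob n (sbasis n i) (sbasis n j) =
    (if i = j then 4 else if fst i = fst (snd i) \<and> fst j = fst (snd j) then 2 else 0)"
proof -
  obtain a b t where ie: "i = (a,b,t)" by (cases i) auto
  obtain c d s where je: "j = (c,d,s)" by (cases j) auto
  have I: "a < b \<and> b \<le> n \<or> a = b \<and> a < n \<and> t" using i unfolding ie sidx_def by auto
  have J: "c < d \<and> d \<le> n \<or> c = d \<and> c < n \<and> s" using j unfolding je sidx_def by auto
  show ?thesis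
  proof (cases "a = b")
    case True
    then have an: "a < n" "t" using I by auto
    have "sbasis n i = hdiag n a" unfolding ie sbasis_def using True by simp
    then have "frob n (sbasis n i) (sbasis n j) = 2 * (Re (\<i> * cnj (sbasis n j a a)) + Re ((- \<i>) * cnj (sbasis n j n n)))"
      using frob_hdiag[OF an(1)] by simp
    also have "\<dots> = (if i = j then 4 else if fst i = fst (snd i) \<and> fst j = fst (snd j) then 2 else 0)"
      using J an True unfolding ie je sbasis_def hdiag_def offdiag_def by (cases "c = d") auto
    finally show ?thesis .
  next
    case False
    then have ab: "a < b" "b \<le> n" using I by auto
    have "sbasis n i = offdiag n a b (phase t)" unfolding ie sbasis_def using False by simp
    then have "frob n (sbasis n i) (sbasis n j) = 2 * (Re (phase t * cnj (sbasis n j a b)) + Re ((- jsgn n b * cnj (phase t)) * cnj (sbasis n j b a)))"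
      using frob_offdiag[OF ab] by simp
    also have "\<dots> = (if i = j then 4 else if fst i = fst (snd i) \<and> fst j = fst (snd j) then 2 else 0)"
      using J ab False unfolding ie je sbasis_def hdiag_def offdiag_def phase_def jsgn_def by (cases "c = d"; cases t; cases s) auto
    finally show ?thesis .
  qed
qed

lemma bracket_diagonal: assumes "\<And>x y. x \<noteq> y \<Longrightarrow> A x y = 0" "\<And>x y. x \<noteq> y \<Longrightarrow> B x y = 0"
  shows "bracket n A B = 0"
proof -
  have m: "mmul n A B x y = (if x \<le> n \<and> y \<le> n \<and> x = y then A x x * B x x else 0)"
    if "\<And>x y. x \<noteq> y \<Longrightarrow> A x y = 0" "\<And>x y. x \<noteq> y \<Longrightarrow> B x y = 0" for A B :: cmat and x y
  proof -
    have "(\<Sum>k\<le>n. A x k * B k y) = (\<Sum>k\<le>n. if k = x then A x x * B x y else 0)"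
      by (intro sum.cong refl) (auto simp: that)
    then show ?thesis unfolding mmul_def using that by (auto simp: sum.delta)
  qed
  show ?thesis unfolding bracket_def
    by (simp add: fun_eq_iff m[of A B, OF assms] m[of B A, OF assms(2,1)] mult.commute)
qed

lemma bracket_hdiag: assumes "a < n" "c < n"
  shows "bracket n (hdiag n a) (hdiag n c) = 0"
  by (rule bracket_diagonal) (auto simp: hdiag_def)

definition norm2 :: "nat \<Rightarrow> cmat \<Rightarrow> real" where
  "norm2 n Q = (\<Sum>x\<le>n. \<Sum>y\<le>n. (cmod (Q x y))\<^sup>2)"

lemma frob_self_eq_norm2: "frob n Q Q = 2 * norm2 n Q"
proof -
  have "\<And>z. Re (z * cnj z) = (cmod z)\<^sup>2" by (simp add: complex_mult_cnj cmod_power2)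
  then show ?thesis unfolding frob_def norm2_def by simp
qed

lemma diff_square_le: "((x::real) - y)\<^sup>2 \<le> 2 * x\<^sup>2 + 2 * y\<^sup>2"
proof -
  have "0 \<le> (x + y)\<^sup>2" by simp
  then show ?thesis by (simp add: power2_eq_square algebra_simps)
qed

lemma norm2_diff_le: "norm2 n (A - B) \<le> 2 * norm2 n A + 2 * norm2 n B"
proof -
  have "(cmod (A x y - B x y))\<^sup>2 \<le> 2 * (cmod (A x y))\<^sup>2 + 2 * (cmod (B x y))\<^sup>2" for x y
    using diff_square_le[of "Re (A x y)" "Re (B x y)"] diff_square_le[of "Im (A x y)" "Im (B x y)"]
    by (simp add: cmod_power2)
  then have "norm2 n (A - B) \<le> (\<Sum>x\<le>n. \<Sum>y\<le>n. 2 * (cmod (A x y))\<^sup>2 + 2 * (cmod (B x y))\<^sup>2)"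
    unfolding norm2_def by (intro sum_mono) simp
  also have "\<dots> = 2 * norm2 n A + 2 * norm2 n B"
    unfolding norm2_def by (simp add: sum.distrib sum_distrib_left)
  finally show ?thesis .
qed

lemma sum_two_le: assumes "a \<noteq> b" "a \<le> n" "b \<le> (n::nat)" "\<And>x. 0 \<le> f x"
  shows "f a + f b \<le> (\<Sum>x\<le>n. (f x :: real))"
proof -
  have "f a + f b = sum f {a, b}" using assms(1) by simp
  also have "\<dots> \<le> sum f {..n}" using assms by (intro sum_mono2) auto
  finally show ?thesis .
qed

lemma sum_norm2_two_delta: assumes "a \<noteq> b" "a \<le> n" "b \<le> (n::nat)"
  shows "(\<Sum>x\<le>n. (cmod ((if x = a then p else 0) + (if x = b then q else 0)))\<^sup>2) = (cmod p)\<^sup>2 + (cmod q)\<^sup>2"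
proof -
  have "(\<Sum>x\<le>n. (cmod ((if x = a then p else 0) + (if x = b then q else 0)))\<^sup>2)
      = (\<Sum>x\<le>n. (if x = a then (cmod p)\<^sup>2 else 0) + (if x = b then (cmod q)\<^sup>2 else 0))"
    using assms by (intro sum.cong refl) auto
  also have "\<dots> = (cmod p)\<^sup>2 + (cmod q)\<^sup>2" using assms by (simp add: sum.distrib)
  finally show ?thesis .
qed

lemma norm2_two_rows_le:
  assumes ab: "a \<noteq> b" "a \<le> n" "b \<le> n" and ab': "a' \<noteq> b'" "a' \<le> n" "b' \<le> n"
    and al: "cmod \<alpha> = 1" and be: "cmod \<beta> = 1"
    and M: "\<And>x y. x \<le> n \<Longrightarrow> y \<le> n \<Longrightarrow> M x y = (if x = a then \<alpha> * Q a' y else 0) + (if x = b then \<beta> * Q b' y else 0)"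
  shows "norm2 n M \<le> norm2 n Q"
proof -
  have "norm2 n M = (\<Sum>y\<le>n. \<Sum>x\<le>n. (cmod (M x y))\<^sup>2)" unfolding norm2_def by (rule sum.swap)
  also have "\<dots> = (\<Sum>y\<le>n. (cmod (Q a' y))\<^sup>2 + (cmod (Q b' y))\<^sup>2)"
  proof (intro sum.cong refl)
    fix y assume y: "y \<in> {..n}"
    have "(\<Sum>x\<le>n. (cmod (M x y))\<^sup>2) = (\<Sum>x\<le>n. (cmod ((if x = a then \<alpha> * Q a' y else 0) + (if x = b then \<beta> * Q b' y else 0)))\<^sup>2)"
      using y by (intro sum.cong refl) (simp add: M)
    also have "\<dots> = (cmod (Q a' y))\<^sup>2 + (cmod (Q b' y))\<^sup>2"
      using sum_norm2_two_delta[OF ab] al be by (simp add: norm_mult)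
    finally show "(\<Sum>x\<le>n. (cmod (M x y))\<^sup>2) = (cmod (Q a' y))\<^sup>2 + (cmod (Q b' y))\<^sup>2" .
  qed
  also have "\<dots> \<le> (\<Sum>y\<le>n. \<Sum>x\<le>n. (cmod (Q x y))\<^sup>2)"
    by (intro sum_mono sum_two_le[OF ab']) simp
  also have "\<dots> = norm2 n Q" unfolding norm2_def by (rule sum.swap)
  finally show ?thesis .
qed

lemma norm2_two_cols_le:
  assumes ab: "a \<noteq> b" "a \<le> n" "b \<le> n" and ab': "a' \<noteq> b'" "a' \<le> n" "b' \<le> n"
    and al: "cmod \<alpha> = 1" and be: "cmod \<beta> = 1"
    and M: "\<And>x y. x \<le> n \<Longrightarrow> y \<le> n \<Longrightarrow> M x y = (if y = a then \<alpha> * Q x a' else 0) + (if y = b then \<beta> * Q x b' else 0)"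
  shows "norm2 n M \<le> norm2 n Q"
proof -
  have "norm2 n M = (\<Sum>x\<le>n. (cmod (Q x a'))\<^sup>2 + (cmod (Q x b'))\<^sup>2)"
    unfolding norm2_def
  proof (intro sum.cong refl)
    fix x assume x: "x \<in> {..n}"
    have "(\<Sum>y\<le>n. (cmod (M x y))\<^sup>2) = (\<Sum>y\<le>n. (cmod ((if y = a then \<alpha> * Q x a' else 0) + (if y = b then \<beta> * Q x b' else 0)))\<^sup>2)"
      using x by (intro sum.cong refl) (simp add: M)
    also have "\<dots> = (cmod (Q x a'))\<^sup>2 + (cmod (Q x b'))\<^sup>2"
      using sum_norm2_two_delta[OF ab] al be by (simp add: norm_mult)
    finally show "(\<Sum>y\<le>n. (cmod (M x y))\<^sup>2) = (cmod (Q x a'))\<^sup>2 + (cmod (Q x b'))\<^sup>2" .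
  qed
  also have "\<dots> \<le> norm2 n Q"
    unfolding norm2_def by (intro sum_mono sum_two_le[OF ab']) simp
  finally show ?thesis .
qed

lemma norm_phase: "cmod (phase t) = 1"
  by (simp add: phase_def)

lemma norm_offdiag_partner: "cmod (- jsgn n b * cnj u) = cmod u"
  by (simp add: jsgn_def norm_mult)

lemma norm_jsgn_cnj: "cmod (jsgn n b * cnj u) = cmod u"
  by (simp add: jsgn_def norm_mult)

lemma norm2_mmul_sbasis_left: assumes i: "i \<in> sidx n" shows "norm2 n (mmul n (sbasis n i) Q) \<le> norm2 n Q"
proof -
  obtain a b t where ie: "i = (a,b,t)" by (cases i) auto
  have I: "a < b \<and> b \<le> n \<or> a = b \<and> a < n \<and> t" using i unfolding ie sidx_def by auto
  show ?thesis
  proof (cases "a = b")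
    case True
    then have an: "a < n" using I by auto
    have e: "sbasis n i = hdiag n a" unfolding ie sbasis_def using True by simp
    show ?thesis unfolding e
      by (rule norm2_two_rows_le[of a n n a n "\<i>" "- \<i>"]) (use an in \<open>auto simp: mmul_hdiag_left\<close>)
  next
    case False
    then have ab: "a < b" "b \<le> n" using I by auto
    have e: "sbasis n i = offdiag n a b (phase t)" unfolding ie sbasis_def using False by simp
    show ?thesis unfolding e
      by (rule norm2_two_rows_le[of a b n b a "phase t" "- jsgn n b * cnj (phase t)"]) (use ab in \<open>auto simp: mmul_offdiag_left norm_phase norm_offdiag_partner norm_jsgn_cnj\<close>)
  qed
qed

lemma norm2_mmul_sbasis_right: assumes i: "i \<in> sidx n" shows "norm2 n (mmul n Q (sbasis n i)) \<le> norm2 n Q"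
proof -
  obtain a b t where ie: "i = (a,b,t)" by (cases i) auto
  have I: "a < b \<and> b \<le> n \<or> a = b \<and> a < n \<and> t" using i unfolding ie sidx_def by auto
  show ?thesis
  proof (cases "a = b")
    case True
    then have an: "a < n" using I by auto
    have e: "sbasis n i = hdiag n a" unfolding ie sbasis_def using True by simp
    show ?thesis unfolding e
      by (rule norm2_two_cols_le[of a n n a n "\<i>" "- \<i>"]) (use an in \<open>auto simp: mmul_hdiag_right mult.commute\<close>)
  next
    case False
    then have ab: "a < b" "b \<le> n" using I by auto
    have e: "sbasis n i = offdiag n a b (phase t)" unfolding ie sbasis_def using False by simp
    show ?thesis unfolding e
      by (rule norm2_two_cols_le[of b a n a b "phase t" "- jsgn n b * cnj (phase t)"]) (use ab in \<open>auto simp: mmul_offdiag_right norm_phase norm_offdiag_partner norm_jsgn_cnj mult.commute norm_mult norm_jsgn\<close>)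
  qed
qed

lemma frob_bracket_sbasis_le: assumes i: "i \<in> sidx n" and j: "j \<in> sidx n"
  shows "frob n (bracket n (sbasis n i) (sbasis n j)) (bracket n (sbasis n i) (sbasis n j)) \<le> 16"
proof -
  have nY: "norm2 n (sbasis n j) = 2" using frob_sbasis[OF j j] frob_self_eq_norm2[of n "sbasis n j"] by simp
  have "norm2 n (bracket n (sbasis n i) (sbasis n j)) \<le> 2 * norm2 n (mmul n (sbasis n i) (sbasis n j)) + 2 * norm2 n (mmul n (sbasis n j) (sbasis n i))"
    unfolding bracket_def by (rule norm2_diff_le)
  also have "\<dots> \<le> 2 * norm2 n (sbasis n j) + 2 * norm2 n (sbasis n j)"
    using norm2_mmul_sbasis_left[OF i, of "sbasis n j"] norm2_mmul_sbasis_right[OF i, of "sbasis n j"] by simp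
  finally show ?thesis unfolding frob_self_eq_norm2 nY by simp
qed

lemma frob_self_nonneg: "0 \<le> frob n Q Q"
  unfolding frob_self_eq_norm2 norm2_def by (simp add: sum_nonneg)

lemma gt_curv_le_quarter:
  assumes X: "X \<in> su n" and Y: "Y \<in> su n"
    and tX: "theta n X = smul (complex_of_real e) X" and tY: "theta n Y = smul (complex_of_real d) Y"
    and e: "e = 1 \<or> e = -1" and d: "d = 1 \<or> d = -1"
  shows "gt n (curv n X Y Y) X \<le> frob n (bracket n X Y) (bracket n X Y) / 4"
proof -
  define K where "K = (- ((1 - d + e) / 2) * (1 - e * d + d) / 2 - (- 1 + d - e * d) / 2) * d"
  have "K = 1/4 \<or> K = -7/4" unfolding K_def using e d by auto
  then show ?thesis
    using gt_curv_eq[OF X Y tX tY] frob_self_nonneg[of n "bracket n X Y"] unfolding K_def[symmetric]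
    by (elim disjE) simp_all
qed

lemma gt_sbasis:
  assumes "i \<in> sidx n" "j \<in> sidx n"
  shows "gt n (sbasis n i) (sbasis n j) =
    (if i = j then 4 else if fst i = fst (snd i) \<and> fst j = fst (snd j) then 2 else 0)"
  using gt_eq_frob[OF sbasis_su sbasis_su, OF assms] frob_sbasis[OF assms] by simp

theorem proposition3p8:
  fixes n :: nat and X Y :: cmat
  assumes "1 \<le> n"
    and "X \<in> std_basis n" and "Y \<in> std_basis n" and "X \<noteq> Y"
  shows "sec_curv n X Y \<le> 1 / 4"
proof -
  obtain i j where i: "i \<in> sidx n" and j: "j \<in> sidx n" and XY: "X = sbasis n i" "Y = sbasis n j"
    using assms(2,3) unfolding std_basis_eq by auto
  have "i \<noteq> j" using assms(4) XY by auto
  have gXX: "gt n X X = 4" and gYY: "gt n Y Y = 4" unfolding XY gt_sbasis[OF i i] gt_sbasis[OF j j] by simp_all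
  have curv_le: "gt n (curv n X Y Y) X \<le> frob n (bracket n X Y) (bracket n X Y) / 4"
    unfolding XY by (rule gt_curv_le_quarter[OF sbasis_su sbasis_su theta_sbasis theta_sbasis, OF i j i j]) auto
  show ?thesis
  proof (cases "fst i = fst (snd i) \<and> fst j = fst (snd j)")
    case True
    then have "bracket n X Y = 0"
      using i j unfolding XY sidx_def sbasis_def by (auto intro: bracket_hdiag)
    then have "gt n (curv n X Y Y) X \<le> 0" using curv_le by (simp add: frob_def)
    moreover have "gt n X Y = 2" unfolding XY gt_sbasis[OF i j] using True \<open>i \<noteq> j\<close> by simp
    ultimately show ?thesis unfolding sec_curv_def gXX gYY by (simp add: divide_nonpos_pos)
  next
    case False
    then have "gt n X Y = 0" unfolding XY gt_sbasis[OF i j] using \<open>i \<noteq> j\<close> by simp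
    moreover have "gt n (curv n X Y Y) X \<le> 4"
      using curv_le frob_bracket_sbasis_le[OF i j] unfolding XY by simp
    ultimately show ?thesis unfolding sec_curv_def gXX gYY by simp
  qed
qed

end
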